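(* Let $q\in U(1)$ and let $A(DT^2_q)$ be as defined below. Let $\mathcal H$ be a Hilbert space with orthonormal basis $\{e^c_{m,n},e^q_{m,n}\}_{m,n\in\mathbb{Z}}$, and let $\pi$ be the faithful $*$-representation of $A(DT^2_q)$ on $\mathcal H$ determined by $$\pi(a)e^c_{m,n}=\begin{cases}e^c_{m,n+1}& n\ge0\\ e^c_{m+1,n+1}& n<0\end{cases},\quad \pi(b)e^q_{m,n}=\begin{cases}-q^{2n-1}e^q_{m+1,n-1}& n>0\\ q^{2m}e^q_{m,n-1}& n\le0\end{cases},$$ $$\pi(c)e^q_{m,n}=\begin{cases}e^q_{m,n+1}& n\ge0\\ -q^{-2m-1}e^q_{m+1,n+1}& n<0\end{cases},\quad \pi(d)e^c_{m,n}=\begin{cases}e^c_{m+1,n-1}& n>0\\ e^c_{m,n-1}& n\le0\end{cases},$$ $\pi(a)e^q_{m,n}=0$, $\pi(b)e^c_{m,n}=0$, $\pi(c)e^c_{m,n}=0$, $\pi(d)e^q_{m,n}=0$. Let $C(DT^2_q)$ be the operator-norm closure of $\pi(A(DT^2_q))$. Then the comultiplication of $A(DT^2_q)$ extends to a unital $*$-homomorphism $C(DT^2_q)\to C(DT^2_q)\otimes C(DT^2_q)$, and $C(DT^2_q)$ with the fundamental matrix $u=\begin{pmatrix}a&b\\c&d\end{pmatrix}$ is a compact matrix quantum group in the sense of Woronowicz.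
   Context: Let $q\in U(1)$. $A(U_{q^{-1},q}(2))$ is the complex $*$-Hopf algebra generated by $a,b,c,d,D^{-1}$, where $D:=ad-q^{-1}bc$, with relations $ab=q^{-1}ba$, $cd=q^{-1}dc$, $ac=qca$, $bd=qdb$, $ad=da$, $bc=q^2cb$, $DD^{-1}=D^{-1}D=1$; coproduct $\Delta(a)=a\otimes a+b\otimes c$, $\Delta(b)=a\otimes b+b\otimes d$, $\Delta(c)=c\otimes a+d\otimes c$, $\Delta(d)=c\otimes b+d\otimes d$; counit $\varepsilon(a)=\varepsilon(d)=1$, $\varepsilon(b)=\varepsilon(c)=0$; involution $a^*=S(a)$, $b^*=S(c)$, $c^*=S(b)$, $d^*=S(d)$ with $S$ the antipode. $A(DT^2_q)$ is the quotient of $A(U_{q^{-1},q}(2))$ by the Hopf ideal generated by $ab,ac,cd,bd$, with images of the generators denoted by the same letters. A compact matrix quantum group in the sense of Woronowicz is a pair $(A,u)$ where $A$ is a unital C$^*$-algebra and $u=(u_{ij})\in M_N(A)$ is such that the $*$-subalgebra generated by the $u_{ij}$ is dense in $A$, there is a unital $*$-homomorphism $\Delta:A\to A\otimes A$ (minimal tensor product) with $\Delta(u_{ij})=\sum_k u_{ik}\otimes u_{kj}$, and both $u$ and its transpose $u^T$ are invertible in $M_N(A)$. *)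

theory Defs
  imports "HOL-Analysis.Analysis"
begin

definition l2 :: "('i \<Rightarrow> complex) set" where
  "l2 = {x. (\<lambda>i. (cmod (x i))^2) summable_on UNIV}"

definition l2norm :: "('i \<Rightarrow> complex) \<Rightarrow> real" where
  "l2norm x = sqrt (\<Sum>\<^sub>\<infinity>i. (cmod (x i))^2)"

definition l2inner :: "('i \<Rightarrow> complex) \<Rightarrow> ('i \<Rightarrow> complex) \<Rightarrow> complex" where
  "l2inner x y = (\<Sum>\<^sub>\<infinity>i. cnj (x i) * y i)"

type_synonym 'i op = "('i \<Rightarrow> complex) \<Rightarrow> ('i \<Rightarrow> complex)"

text \<open>Bounded operators on l2(I); normalised to be 0 outside l2 so that
  operators are identified with HOL functions.\<close>
definition bops :: "'i op set" where
  "bops = {T. (\<forall>x\<in>l2. T x \<in> l2)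
            \<and> (\<forall>x\<in>l2. \<forall>y\<in>l2. T (\<lambda>i. x i + y i) = (\<lambda>i. T x i + T y i))
            \<and> (\<forall>x\<in>l2. \<forall>c. T (\<lambda>i. c * x i) = (\<lambda>i. c * T x i))
            \<and> (\<exists>K. \<forall>x\<in>l2. l2norm (T x) \<le> K * l2norm x)
            \<and> (\<forall>x. x \<notin> l2 \<longrightarrow> T x = (\<lambda>i. 0))}"

definition idop :: "'i op" where
  "idop x = (if x \<in> l2 then x else (\<lambda>i. 0))"

definition zero_op :: "'i op" where
  "zero_op x = (\<lambda>i. 0)"

definition op_add :: "'i op \<Rightarrow> 'i op \<Rightarrow> 'i op" where
  "op_add S T x = (\<lambda>i. S x i + T x i)"

definition op_scale :: "complex \<Rightarrow> 'i op \<Rightarrow> 'i op" where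
  "op_scale c T x = (\<lambda>i. c * T x i)"

definition op_diff :: "'i op \<Rightarrow> 'i op \<Rightarrow> 'i op" where
  "op_diff S T x = (\<lambda>i. S x i - T x i)"

definition op_comp :: "'i op \<Rightarrow> 'i op \<Rightarrow> 'i op" where
  "op_comp S T = S \<circ> T"

primrec op_sumk :: "(nat \<Rightarrow> 'i op) \<Rightarrow> nat \<Rightarrow> 'i op" where
  "op_sumk f 0 = zero_op"
| "op_sumk f (Suc n) = op_add (op_sumk f n) (f n)"

definition opnorm :: "'i op \<Rightarrow> real" where
  "opnorm T = Sup {l2norm (T x) | x. x \<in> l2 \<and> l2norm x \<le> 1}"

definition adj :: "'i op \<Rightarrow> 'i op" where
  "adj T = (THE S. S \<in> bops \<and> (\<forall>x\<in>l2. \<forall>y\<in>l2. l2inner (S y) x = l2inner y (T x)))"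

definition op_closure :: "'i op set \<Rightarrow> 'i op set" where
  "op_closure S = {T \<in> bops. \<forall>e>0. \<exists>R\<in>S. opnorm (op_diff T R) < e}"

inductive_set star_alg :: "'i op set \<Rightarrow> 'i op set" for G where
  gen: "T \<in> G \<Longrightarrow> T \<in> star_alg G"
| add: "S \<in> star_alg G \<Longrightarrow> T \<in> star_alg G \<Longrightarrow> op_add S T \<in> star_alg G"
| scale: "T \<in> star_alg G \<Longrightarrow> op_scale c T \<in> star_alg G"
| comp: "S \<in> star_alg G \<Longrightarrow> T \<in> star_alg G \<Longrightarrow> op_comp S T \<in> star_alg G"
| star: "T \<in> star_alg G \<Longrightarrow> adj T \<in> star_alg G"

definition unital_cstar :: "'i op set \<Rightarrow> bool" where
  "unital_cstar A \<longleftrightarrow> A \<subseteq> bops \<and> idop \<in> A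
     \<and> (\<forall>S\<in>A. \<forall>T\<in>A. op_add S T \<in> A \<and> op_comp S T \<in> A)
     \<and> (\<forall>T\<in>A. \<forall>c. op_scale c T \<in> A) \<and> (\<forall>T\<in>A. adj T \<in> A)
     \<and> op_closure A = A"

definition op_tensor :: "'i op \<Rightarrow> 'j op \<Rightarrow> ('i \<times> 'j) op" where
  "op_tensor S T x =
     (if x \<in> l2 then
        (let y = (\<lambda>(i, j). T (\<lambda>j'. x (i, j')) j)
         in (\<lambda>(i, j). S (\<lambda>i'. y (i', j)) i))
      else (\<lambda>p. 0))"

definition min_tensor :: "'i op set \<Rightarrow> 'j op set \<Rightarrow> ('i \<times> 'j) op set" where
  "min_tensor A B = op_closure
     {op_sumk (\<lambda>k. op_tensor (f k) (g k)) n | f g n.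
        (\<forall>k<n. f k \<in> A) \<and> (\<forall>k<n. g k \<in> B)}"

definition unital_star_hom :: "'i op set \<Rightarrow> 'j op set \<Rightarrow> ('i op \<Rightarrow> 'j op) \<Rightarrow> bool" where
  "unital_star_hom A B \<Phi> \<longleftrightarrow> (\<forall>T\<in>A. \<Phi> T \<in> B) \<and> \<Phi> idop = idop
     \<and> (\<forall>S\<in>A. \<forall>T\<in>A. \<Phi> (op_add S T) = op_add (\<Phi> S) (\<Phi> T)
                    \<and> \<Phi> (op_comp S T) = op_comp (\<Phi> S) (\<Phi> T))
     \<and> (\<forall>T\<in>A. \<forall>c. \<Phi> (op_scale c T) = op_scale c (\<Phi> T))
     \<and> (\<forall>T\<in>A. \<Phi> (adj T) = adj (\<Phi> T))"

definition mat_invertible :: "nat \<Rightarrow> 'i op set \<Rightarrow> (nat \<Rightarrow> nat \<Rightarrow> 'i op) \<Rightarrow> bool" where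
  "mat_invertible N A u \<longleftrightarrow> (\<exists>v. (\<forall>i<N. \<forall>j<N. v i j \<in> A)
     \<and> (\<forall>i<N. \<forall>j<N. op_sumk (\<lambda>k. op_comp (u i k) (v k j)) N = (if i = j then idop else zero_op))
     \<and> (\<forall>i<N. \<forall>j<N. op_sumk (\<lambda>k. op_comp (v i k) (u k j)) N = (if i = j then idop else zero_op)))"

definition compact_matrix_qg :: "'i op set \<Rightarrow> nat \<Rightarrow> (nat \<Rightarrow> nat \<Rightarrow> 'i op) \<Rightarrow> bool" where
  "compact_matrix_qg A N u \<longleftrightarrow> unital_cstar A
     \<and> (\<forall>i<N. \<forall>j<N. u i j \<in> A)
     \<and> A \<subseteq> op_closure (star_alg {u i j | i j. i < N \<and> j < N})
     \<and> (\<exists>\<Delta>. unital_star_hom A (min_tensor A A) \<Delta>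
            \<and> (\<forall>i<N. \<forall>j<N. \<Delta> (u i j) = op_sumk (\<lambda>k. op_tensor (u i k) (u k j)) N))
     \<and> mat_invertible N A u \<and> mat_invertible N A (\<lambda>i j. u j i)"

datatype kind = Kc | Kq   \<comment> \<open>e^c and e^q basis vectors\<close>

type_synonym idx = "kind \<times> int \<times> int"

text \<open>Operator determined by T e_i = w i * e_(s i) (s injective where w is nonzero).\<close>
definition basis_op :: "(idx \<Rightarrow> complex) \<Rightarrow> (idx \<Rightarrow> idx) \<Rightarrow> idx op" where
  "basis_op w s x = (if x \<in> l2 then (\<lambda>j. \<Sum>\<^sub>\<infinity>i\<in>{i. s i = j}. w i * x i) else (\<lambda>j. 0))"

definition pi_a :: "complex \<Rightarrow> idx op" where
  "pi_a q = basis_op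
     (\<lambda>(k, m, n). if k = Kc then 1 else 0)
     (\<lambda>(k, m, n). if k = Kc then (if n \<ge> 0 then (Kc, m, n + 1) else (Kc, m + 1, n + 1)) else (k, m, n))"

definition pi_b :: "complex \<Rightarrow> idx op" where
  "pi_b q = basis_op
     (\<lambda>(k, m, n). if k = Kq then (if n > 0 then - (q powi (2 * n - 1)) else q powi (2 * m)) else 0)
     (\<lambda>(k, m, n). if k = Kq then (if n > 0 then (Kq, m + 1, n - 1) else (Kq, m, n - 1)) else (k, m, n))"

definition pi_c :: "complex \<Rightarrow> idx op" where
  "pi_c q = basis_op
     (\<lambda>(k, m, n). if k = Kq then (if n \<ge> 0 then 1 else - (q powi (- 2 * m - 1))) else 0)
     (\<lambda>(k, m, n). if k = Kq then (if n \<ge> 0 then (Kq, m, n + 1) else (Kq, m + 1, n + 1)) else (k, m, n))"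

definition pi_d :: "complex \<Rightarrow> idx op" where
  "pi_d q = basis_op
     (\<lambda>(k, m, n). if k = Kc then 1 else 0)
     (\<lambda>(k, m, n). if k = Kc then (if n > 0 then (Kc, m + 1, n - 1) else (Kc, m, n - 1)) else (k, m, n))"

definition pi_D :: "complex \<Rightarrow> idx op" where
  "pi_D q = op_diff (op_comp (pi_a q) (pi_d q)) (op_scale (inverse q) (op_comp (pi_b q) (pi_c q)))"

definition pi_Dinv :: "complex \<Rightarrow> idx op" where
  "pi_Dinv q = (THE S. S \<in> bops \<and> op_comp S (pi_D q) = idop \<and> op_comp (pi_D q) S = idop)"

text \<open>C(DT^2_q): norm closure of pi(A(DT^2_q)), i.e. of the unital *-algebra
  generated by pi of the generators a, b, c, d, D^-1.\<close>
definition C_DT :: "complex \<Rightarrow> idx op set" where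
  "C_DT q = op_closure (star_alg {idop, pi_a q, pi_b q, pi_c q, pi_d q, pi_Dinv q})"

definition u_DT :: "complex \<Rightarrow> nat \<Rightarrow> nat \<Rightarrow> idx op" where
  "u_DT q i j = (if i = 0 then (if j = 0 then pi_a q else pi_b q)
                 else (if j = 0 then pi_c q else pi_d q))"

end

theory Submission
  imports Defs
begin

text \<open>Every generator acts on the orthonormal basis as a monomial operator
  \<open>e\<^sub>i \<mapsto> w i e\<^bsub>\<sigma> i\<^esub>\<close>, so all algebraic identities between generators are checked on
  basis vectors. Conjugating by a diagonal unitary gauge \<open>V\<close>, which also changes the coordinates
  \<open>(m, n)\<close> to \<open>(x, y)\<close>, turns \<open>a\<close>, \<open>c\<close> into weighted shifts in \<open>x\<close> and \<open>b\<close>, \<open>d\<close> into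
  weighted shifts in \<open>y\<close>. A weighted permutation unitary \<open>W\<close> of \<open>H \<otimes> H\<close> then satisfies
  \<open>W (1 \<otimes> X) W\<^sup>* = \<Delta>(X)\<close> for every gauged generator \<open>X\<close>, so
  \<open>\<Delta> = Ad ((V\<^sup>* \<otimes> V\<^sup>*) W) \<circ> (1 \<otimes> -) \<circ> Ad V\<close> is a norm-decreasing unital
  *-homomorphism on all bounded operators with the required values on the generators. Being
  norm-decreasing, it maps the norm closure of the *-algebra generated by the generators into the
  closure of their algebraic tensor product, that is, into the minimal tensor product. Finally
  \<open>\<pi>(D)\<close> is unitary, so \<open>\<pi>(D\<^sup>-\<^sup>1) = \<pi>(D)\<^sup>*\<close>, and \<open>u\<close> and \<open>u\<^sup>T\<close> are unitary, which gives
  their invertibility.\<close>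

section \<open>Square-summable functions\<close>

definition ket :: "'i \<Rightarrow> 'i \<Rightarrow> complex" where "ket i = (\<lambda>j. if j = i then 1 else 0)"

lemma square_sum_le: "((a::real) + b)^2 \<le> 2 * a^2 + 2 * b^2"
proof -
  have "0 \<le> (a - b)^2" by simp
  thus ?thesis by (simp add: power2_eq_square algebra_simps)
qed

lemma infsum_single_nonzero:
  assumes "\<And>j. j \<noteq> i \<Longrightarrow> f j = 0"
  shows "infsum f A = (if i \<in> A then f i else 0)"
proof -
  have "infsum f A = infsum f (A \<inter> {i})"
    by (rule infsum_cong_neutral) (use assms in auto)
  also have "\<dots> = (if i \<in> A then f i else 0)"
    by (cases "i \<in> A") auto
  finally show ?thesis .
qed

lemma summable_on_single_nonzero:
  assumes "\<And>j. j \<noteq> i \<Longrightarrow> f j = 0"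
  shows "f summable_on A"
  by (rule finite_nonzero_values_imp_summable_on) (rule finite_subset[of _ "{i}"], use assms in auto)

lemma l2_zero[simp]: "(\<lambda>i. 0) \<in> l2" by (simp add: l2_def)

lemma l2_scale: "x \<in> l2 \<Longrightarrow> (\<lambda>i. c * x i) \<in> l2"
  unfolding l2_def by (simp add: norm_mult power_mult_distrib summable_on_cmult_right)

lemma l2_add:
  assumes "x \<in> l2" "y \<in> l2"
  shows "(\<lambda>i. x i + y i) \<in> l2"
proof -
  have s: "(\<lambda>i. 2 * (cmod (x i))^2 + 2 * (cmod (y i))^2) summable_on UNIV"
    using assms by (auto simp: l2_def intro!: summable_on_add summable_on_cmult_right)
  have "(cmod (x i + y i))^2 \<le> 2 * (cmod (x i))^2 + 2 * (cmod (y i))^2" for i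
  proof -
    have "cmod (x i + y i) \<le> cmod (x i) + cmod (y i)" by (rule norm_triangle_ineq)
    hence "(cmod (x i + y i))^2 \<le> (cmod (x i) + cmod (y i))^2" by (simp add: power_mono)
    also have "\<dots> \<le> 2 * (cmod (x i))^2 + 2 * (cmod (y i))^2" by (rule square_sum_le)
    finally show ?thesis .
  qed
  thus ?thesis unfolding l2_def mem_Collect_eq
    by (intro summable_on_comparison_test[OF s]) auto
qed

lemma l2_neg: "x \<in> l2 \<Longrightarrow> (\<lambda>i. - x i) \<in> l2"
  using l2_scale[of x "-1"] by simp

lemma l2_diff: "x \<in> l2 \<Longrightarrow> y \<in> l2 \<Longrightarrow> (\<lambda>i. x i - y i) \<in> l2"
  using l2_add[of x "\<lambda>i. - y i"] l2_neg[of y] by simp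

lemma l2_ket[simp]: "ket i \<in> l2"
  unfolding l2_def ket_def mem_Collect_eq by (rule summable_on_single_nonzero[where i=i]) auto

lemma l2_finite_support: "finite {i. x i \<noteq> 0} \<Longrightarrow> x \<in> l2"
  unfolding l2_def mem_Collect_eq by (rule finite_nonzero_values_imp_summable_on) (rule finite_subset, auto)

lemma l2_summable_on: "x \<in> l2 \<Longrightarrow> (\<lambda>i. (cmod (x i))^2) summable_on A"
  unfolding l2_def using summable_on_subset_banach by blast

lemma l2norm_sq: "(l2norm x)^2 = (\<Sum>\<^sub>\<infinity>i. (cmod (x i))^2)"
  unfolding l2norm_def by (simp add: infsum_nonneg)

lemma l2norm_nonneg[simp]: "0 \<le> l2norm x"
  unfolding l2norm_def by (simp add: infsum_nonneg)

lemma l2norm_zero[simp]: "l2norm (\<lambda>i. 0) = 0"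
  unfolding l2norm_def by simp

lemma l2norm_scale: "x \<in> l2 \<Longrightarrow> l2norm (\<lambda>i. c * x i) = cmod c * l2norm x"
proof -
  assume x: "x \<in> l2"
  have "(\<Sum>\<^sub>\<infinity>i. (cmod (c * x i))^2) = (cmod c)^2 * (\<Sum>\<^sub>\<infinity>i. (cmod (x i))^2)"
    by (simp add: norm_mult power_mult_distrib infsum_cmult_right')
  thus ?thesis unfolding l2norm_def by (simp add: real_sqrt_mult)
qed

lemma l2norm_eq_0D:
  assumes "x \<in> l2" "l2norm x = 0"
  shows "x = (\<lambda>i. 0)"
proof
  fix i
  have "(\<Sum>\<^sub>\<infinity>i. (cmod (x i))^2) \<le> 0" using assms(2) l2norm_sq[of x] by simp
  hence "(cmod (x i))^2 = 0"
    by (rule nonneg_infsum_le_0D) (use assms(1) in \<open>auto simp: l2_def\<close>)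
  thus "x i = 0" by simp
qed

lemma l2_norm_products_summable:
  assumes "x \<in> l2" "y \<in> l2"
  shows "(\<lambda>i. cmod (x i) * cmod (y i)) summable_on A"
proof -
  have s: "(\<lambda>i. (cmod (x i))^2 + (cmod (y i))^2) summable_on A"
    using assms by (auto intro!: summable_on_add l2_summable_on)
  have "cmod (x i) * cmod (y i) \<le> (cmod (x i))^2 + (cmod (y i))^2" for i
  proof -
    have "0 \<le> (cmod (x i) - cmod (y i))^2" by simp
    hence h1: "2 * (cmod (x i) * cmod (y i)) \<le> (cmod (x i))^2 + (cmod (y i))^2"
      by (simp add: power2_eq_square algebra_simps)
    have h2: "0 \<le> cmod (x i) * cmod (y i)" by simp
    from h1 h2 show ?thesis by linarith
  qed
  thus ?thesis by (intro summable_on_comparison_test[OF s]) auto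
qed

lemma l2_norm_products_le:
  assumes "x \<in> l2" "y \<in> l2"
  shows "(\<Sum>\<^sub>\<infinity>i. cmod (x i) * cmod (y i)) \<le> l2norm x * l2norm y"
proof (rule infsum_le_finite_sums)
  show "(\<lambda>i. cmod (x i) * cmod (y i)) summable_on UNIV" by (rule l2_norm_products_summable[OF assms])
  fix F :: "'a set" assume F: "finite F" "F \<subseteq> UNIV"
  have "(\<Sum>i\<in>F. cmod (x i) * cmod (y i)) = (\<Sum>i\<in>F. \<bar>cmod (x i)\<bar> * \<bar>cmod (y i)\<bar>)" by simp
  also have "\<dots> \<le> L2_set (\<lambda>i. cmod (x i)) F * L2_set (\<lambda>i. cmod (y i)) F"
    by (rule L2_set_mult_ineq)
  also have "\<dots> \<le> l2norm x * l2norm y"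
  proof (rule mult_mono)
    have "L2_set (\<lambda>i. cmod (x i)) F \<le> l2norm x" if "x \<in> l2" for x :: "'a \<Rightarrow> complex"
      unfolding L2_set_def l2norm_def
      by (rule real_sqrt_le_mono, rule finite_sum_le_infsum) (use that F in \<open>auto simp: l2_def\<close>)
    thus "L2_set (\<lambda>i. cmod (x i)) F \<le> l2norm x" "L2_set (\<lambda>i. cmod (y i)) F \<le> l2norm y"
      using assms by auto
  qed (auto simp: L2_set_def intro!: sum_nonneg)
  finally show "(\<Sum>i\<in>F. cmod (x i) * cmod (y i)) \<le> l2norm x * l2norm y" .
qed

lemma l2_inner_summable:
  assumes "x \<in> l2" "y \<in> l2"
  shows "(\<lambda>i. cnj (x i) * y i) summable_on A"
proof -
  have "(\<lambda>i. norm (cnj (x i) * y i)) summable_on A"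
    using l2_norm_products_summable[OF assms, of A] by (simp add: norm_mult)
  thus ?thesis by (rule Infinite_Sum.abs_summable_summable)
qed

lemma l2inner_Cauchy_Schwarz:
  assumes "x \<in> l2" "y \<in> l2"
  shows "cmod (l2inner x y) \<le> l2norm x * l2norm y"
proof -
  have "cmod (l2inner x y) \<le> (\<Sum>\<^sub>\<infinity>i. cmod (cnj (x i) * y i))"
    unfolding l2inner_def
    by (rule norm_infsum_bound) (use l2_norm_products_summable[OF assms] in \<open>simp add: norm_mult\<close>)
  also have "\<dots> = (\<Sum>\<^sub>\<infinity>i. cmod (x i) * cmod (y i))" by (simp add: norm_mult)
  also have "\<dots> \<le> l2norm x * l2norm y" by (rule l2_norm_products_le[OF assms])
  finally show ?thesis .
qed

lemma l2norm_triangle: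
  assumes "x \<in> l2" "y \<in> l2"
  shows "l2norm (\<lambda>i. x i + y i) \<le> l2norm x + l2norm y"
proof -
  have "(l2norm (\<lambda>i. x i + y i))^2 = (\<Sum>\<^sub>\<infinity>i. (cmod (x i + y i))^2)" by (rule l2norm_sq)
  also have "\<dots> \<le> (\<Sum>\<^sub>\<infinity>i. (cmod (x i))^2 + (cmod (y i))^2 + 2 * (cmod (x i) * cmod (y i)))"
  proof (rule infsum_mono)
    show "(\<lambda>i. (cmod (x i + y i))^2) summable_on UNIV" using l2_add[OF assms] by (simp add: l2_def)
    show "(\<lambda>i. (cmod (x i))^2 + (cmod (y i))^2 + 2 * (cmod (x i) * cmod (y i))) summable_on UNIV"
      using assms by (intro summable_on_add summable_on_cmult_right l2_norm_products_summable l2_summable_on)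
    fix i
    have "cmod (x i + y i) \<le> cmod (x i) + cmod (y i)" by (rule norm_triangle_ineq)
    hence "(cmod (x i + y i))^2 \<le> (cmod (x i) + cmod (y i))^2" by (simp add: power_mono)
    thus "(cmod (x i + y i))^2 \<le> (cmod (x i))^2 + (cmod (y i))^2 + 2 * (cmod (x i) * cmod (y i))"
      by (simp add: power2_sum)
  qed
  also have "\<dots> = (\<Sum>\<^sub>\<infinity>i. (cmod (x i))^2) + (\<Sum>\<^sub>\<infinity>i. (cmod (y i))^2) + 2 * (\<Sum>\<^sub>\<infinity>i. cmod (x i) * cmod (y i))"
    using assms
    by (simp add: infsum_add summable_on_add l2_norm_products_summable l2_summable_on infsum_cmult_right' summable_on_cmult_right)
  also have "\<dots> \<le> (l2norm x)^2 + (l2norm y)^2 + 2 * (l2norm x * l2norm y)"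
    using l2_norm_products_le[OF assms] by (simp add: l2norm_sq)
  also have "\<dots> = (l2norm x + l2norm y)^2" by (simp add: power2_sum)
  finally show ?thesis by (rule power2_le_imp_le) simp
qed

lemma l2_mult_bounded:
  assumes B: "\<And>i. cmod (w i) \<le> B" and x: "x \<in> l2"
  shows "(\<lambda>i. w i * x i) \<in> l2" and "l2norm (\<lambda>i. w i * x i) \<le> B * l2norm x"
proof -
  have B0: "0 \<le> B" using B[of undefined] norm_ge_zero order_trans by blast
  have le: "(cmod (w i * x i))^2 \<le> B^2 * (cmod (x i))^2" for i
    using B[of i] by (simp add: norm_mult power_mult_distrib mult_right_mono power_mono)
  have sB: "(\<lambda>i. B^2 * (cmod (x i))^2) summable_on UNIV"
    using x by (simp add: l2_def summable_on_cmult_right)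
  have sw: "(\<lambda>i. (cmod (w i * x i))^2) summable_on UNIV"
    by (rule summable_on_comparison_test[OF sB]) (use le in simp_all)
  then show "(\<lambda>i. w i * x i) \<in> l2" by (simp add: l2_def)
  have "(l2norm (\<lambda>i. w i * x i))^2 \<le> (\<Sum>\<^sub>\<infinity>i. B^2 * (cmod (x i))^2)"
    unfolding l2norm_sq by (rule infsum_mono[OF sw sB le])
  also have "\<dots> = (B * l2norm x)^2" by (simp add: infsum_cmult_right' l2norm_sq power_mult_distrib)
  finally show "l2norm (\<lambda>i. w i * x i) \<le> B * l2norm x"
    by (rule power2_le_imp_le) (simp add: B0)
qed

lemma l2_reindex:
  assumes p: "bij p" and x: "x \<in> l2"
  shows "(\<lambda>j. x (p j)) \<in> l2" and "l2norm (\<lambda>j. x (p j)) = l2norm x"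
proof -
  have b: "bij_betw p UNIV UNIV" using p by (simp add: bij_def)
  show "(\<lambda>j. x (p j)) \<in> l2"
    using x unfolding l2_def mem_Collect_eq by (subst summable_on_reindex_bij_betw[OF b])
  show "l2norm (\<lambda>j. x (p j)) = l2norm x"
    unfolding l2norm_def by (subst infsum_reindex_bij_betw[OF b]) simp
qed

lemma l2inner_ket_right: "l2inner x (ket i) = cnj (x i)"
  unfolding l2inner_def ket_def by (subst infsum_single_nonzero[where i=i]) auto

lemma l2inner_ket_left: "l2inner (ket i) x = x i"
  unfolding l2inner_def ket_def by (subst infsum_single_nonzero[where i=i]) auto

lemma l2inner_add_right: "x \<in> l2 \<Longrightarrow> y \<in> l2 \<Longrightarrow> z \<in> l2 \<Longrightarrow>
   l2inner x (\<lambda>i. y i + z i) = l2inner x y + l2inner x z"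
  unfolding l2inner_def by (simp add: distrib_left infsum_add l2_inner_summable)

lemma l2inner_scale_right: "l2inner x (\<lambda>i. c * y i) = c * l2inner x y"
  unfolding l2inner_def by (simp add: infsum_cmult_right' mult.left_commute)

lemma l2inner_cnj: "cnj (l2inner x y) = l2inner y x"
proof -
  have "cnj (l2inner x y) = (\<Sum>\<^sub>\<infinity>i. cnj (cnj (x i) * y i))"
    by (simp only: l2inner_def infsum_cnj)
  thus ?thesis by (simp add: l2inner_def mult.commute)
qed

lemma l2inner_zero_right[simp]: "l2inner x (\<lambda>i. 0) = 0"
  unfolding l2inner_def by simp

lemma l2inner_diff_right: "x \<in> l2 \<Longrightarrow> y \<in> l2 \<Longrightarrow> z \<in> l2 \<Longrightarrow>
   l2inner x (\<lambda>i. y i - z i) = l2inner x y - l2inner x z"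
  using l2inner_add_right[of x y "\<lambda>i. - z i"] l2inner_scale_right[of x "-1" z] l2_neg[of z]
  by simp

lemma l2_sum: "finite F \<Longrightarrow> (\<And>k. k \<in> F \<Longrightarrow> y k \<in> l2) \<Longrightarrow> (\<lambda>i. \<Sum>k\<in>F. y k i) \<in> l2"
proof (induction F rule: finite_induct)
  case (insert b G) thus ?case using l2_add[of "y b" "\<lambda>i. \<Sum>k\<in>G. y k i"] by simp
qed simp

lemma l2inner_sum_right:
  assumes "x \<in> l2"
  shows "finite F \<Longrightarrow> (\<And>k. k \<in> F \<Longrightarrow> y k \<in> l2) \<Longrightarrow>
   l2inner x (\<lambda>i. \<Sum>k\<in>F. y k i) = (\<Sum>k\<in>F. l2inner x (y k))"
proof (induction F rule: finite_induct)
  case empty thus ?case by simp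
next
  case (insert a F)
  have l: "(\<lambda>i. \<Sum>k\<in>F. y k i) \<in> l2"
    using insert by (intro l2_sum) auto
  hence "l2inner x (\<lambda>i. \<Sum>k\<in>insert a F. y k i) = l2inner x (\<lambda>i. y a i + (\<Sum>k\<in>F. y k i))"
    using insert by simp
  also have "\<dots> = l2inner x (y a) + l2inner x (\<lambda>i. \<Sum>k\<in>F. y k i)"
    using insert l assms by (intro l2inner_add_right) auto
  finally show ?case using insert by simp
qed

section \<open>Bounded operators and the operator norm\<close>

lemma bopsD:
  assumes "T \<in> bops"
  shows bops_l2: "x \<in> l2 \<Longrightarrow> T x \<in> l2"
    and bops_add: "x \<in> l2 \<Longrightarrow> y \<in> l2 \<Longrightarrow> T (\<lambda>i. x i + y i) = (\<lambda>i. T x i + T y i)"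
    and bops_scale: "x \<in> l2 \<Longrightarrow> T (\<lambda>i. c * x i) = (\<lambda>i. c * T x i)"
    and bops_out: "x \<notin> l2 \<Longrightarrow> T x = (\<lambda>i. 0)"
  using assms unfolding bops_def by auto

lemma bops_bound:
  assumes "T \<in> bops"
  shows "\<exists>K\<ge>0. \<forall>x\<in>l2. l2norm (T x) \<le> K * l2norm x"
proof -
  obtain K where K: "\<forall>x\<in>l2. l2norm (T x) \<le> K * l2norm x" using assms unfolding bops_def by blast
  have "l2norm (T x) \<le> max K 0 * l2norm x" if "x \<in> l2" for x
  proof -
    have "l2norm (T x) \<le> K * l2norm x" using K that by auto
    also have "\<dots> \<le> max K 0 * l2norm x" by (rule mult_right_mono) auto
    finally show "l2norm (T x) \<le> max K 0 * l2norm x" .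
  qed
  thus ?thesis by (intro exI[of _ "max K 0"]) auto
qed

lemma bops_zero: "T \<in> bops \<Longrightarrow> T (\<lambda>i. 0) = (\<lambda>i. 0)"
  using bops_scale[of T "\<lambda>i. 0" 0] by simp

lemma bops_neg: "T \<in> bops \<Longrightarrow> x \<in> l2 \<Longrightarrow> T (\<lambda>i. - x i) = (\<lambda>i. - T x i)"
  using bops_scale[of T x "-1"] by simp

lemma bops_diff: "T \<in> bops \<Longrightarrow> x \<in> l2 \<Longrightarrow> y \<in> l2 \<Longrightarrow> T (\<lambda>i. x i - y i) = (\<lambda>i. T x i - T y i)"
  using bops_add[of T x "\<lambda>i. - y i"] bops_neg[of T y] l2_neg[of y] by simp

lemma bops_sum:
  assumes "T \<in> bops"
  shows "finite F \<Longrightarrow> (\<And>k. k \<in> F \<Longrightarrow> y k \<in> l2) \<Longrightarrow> T (\<lambda>i. \<Sum>k\<in>F. y k i) = (\<lambda>i. \<Sum>k\<in>F. T (y k) i)"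
proof (induction F rule: finite_induct)
  case empty thus ?case using bops_zero[OF assms] by simp
next
  case (insert a F)
  have "T (\<lambda>i. \<Sum>k\<in>insert a F. y k i) = T (\<lambda>i. y a i + (\<Sum>k\<in>F. y k i))" using insert by simp
  also have "\<dots> = (\<lambda>i. T (y a) i + T (\<lambda>i. \<Sum>k\<in>F. y k i) i)"
    using insert by (intro bops_add[OF assms] l2_sum) auto
  finally show ?case using insert by simp
qed

definition norms_on_unit_ball :: "'i op \<Rightarrow> real set" where
  "norms_on_unit_ball T = {l2norm (T x) | x. x \<in> l2 \<and> l2norm x \<le> 1}"

lemma opnorm_eq_Sup: "opnorm T = Sup (norms_on_unit_ball T)" unfolding opnorm_def norms_on_unit_ball_def ..

lemma norms_on_unit_ball_nonempty: "norms_on_unit_ball T \<noteq> {}" unfolding norms_on_unit_ball_def by (auto intro!: exI[of _ "\<lambda>i. 0"])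

lemma norms_on_unit_ball_bdd:
  assumes "T \<in> bops"
  shows "bdd_above (norms_on_unit_ball T)"
proof -
  obtain K where K: "K \<ge> 0" "\<forall>x\<in>l2. l2norm (T x) \<le> K * l2norm x" using bops_bound[OF assms] by blast
  show ?thesis unfolding norms_on_unit_ball_def bdd_above_def
  proof (intro exI[of _ K] ballI)
    fix r assume "r \<in> {l2norm (T x) |x. x \<in> l2 \<and> l2norm x \<le> 1}"
    then obtain x where x: "x \<in> l2" "l2norm x \<le> 1" "r = l2norm (T x)" by auto
    have "r \<le> K * l2norm x" using K x by auto
    also have "\<dots> \<le> K" using K x mult_left_mono[of "l2norm x" 1 K] by auto
    finally show "r \<le> K" .
  qed
qed

lemma opnorm_nonneg:
  assumes "T \<in> bops"
  shows "0 \<le> opnorm T"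
proof -
  have "l2norm (T (\<lambda>i. 0)) \<in> norms_on_unit_ball T" unfolding norms_on_unit_ball_def by (auto intro!: exI[of _ "\<lambda>i. 0"])
  hence "l2norm (T (\<lambda>i. 0)) \<le> opnorm T" unfolding opnorm_eq_Sup using norms_on_unit_ball_bdd[OF assms] by (rule cSup_upper)
  thus ?thesis using bops_zero[OF assms] by simp
qed

lemma opnorm_bound:
  assumes "T \<in> bops" "x \<in> l2"
  shows "l2norm (T x) \<le> opnorm T * l2norm x"
proof (cases "l2norm x = 0")
  case True
  hence "x = (\<lambda>i. 0)" using l2norm_eq_0D assms by auto
  thus ?thesis using bops_zero[OF assms(1)] by simp
next
  case False
  hence pos: "l2norm x > 0" using l2norm_nonneg[of x] by linarith
  define c where "c = complex_of_real (1 / l2norm x)"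
  have xl: "(\<lambda>i. c * x i) \<in> l2" using assms by (intro l2_scale)
  have "l2norm (\<lambda>i. c * x i) = cmod c * l2norm x" by (rule l2norm_scale[OF assms(2)])
  hence n1: "l2norm (\<lambda>i. c * x i) = 1" using pos by (simp add: c_def norm_divide)
  have "l2norm (T (\<lambda>i. c * x i)) \<in> norms_on_unit_ball T" unfolding norms_on_unit_ball_def using xl n1 by auto
  hence "l2norm (T (\<lambda>i. c * x i)) \<le> opnorm T" unfolding opnorm_eq_Sup using norms_on_unit_ball_bdd[OF assms(1)] by (rule cSup_upper)
  moreover have "l2norm (T (\<lambda>i. c * x i)) = l2norm (T x) / l2norm x"
  proof -
    have "T (\<lambda>i. c * x i) = (\<lambda>i. c * T x i)" by (rule bops_scale[OF assms])
    hence "l2norm (T (\<lambda>i. c * x i)) = cmod c * l2norm (T x)"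
      using l2norm_scale[OF bops_l2[OF assms]] by simp
    thus ?thesis using pos by (simp add: c_def norm_divide)
  qed
  ultimately have "l2norm (T x) / l2norm x \<le> opnorm T" by simp
  thus ?thesis using pos by (simp add: divide_le_eq)
qed

lemma opnorm_le:
  assumes "\<And>x. x \<in> l2 \<Longrightarrow> l2norm (T x) \<le> K * l2norm x" "0 \<le> K"
  shows "opnorm T \<le> K"
  unfolding opnorm_eq_Sup
proof (rule cSup_least[OF norms_on_unit_ball_nonempty])
  fix r assume "r \<in> norms_on_unit_ball T"
  then obtain x where x: "x \<in> l2" "l2norm x \<le> 1" "r = l2norm (T x)" unfolding norms_on_unit_ball_def by auto
  have "r \<le> K * l2norm x" using assms x by auto
  also have "\<dots> \<le> K" using assms x mult_left_mono[of "l2norm x" 1 K] by auto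
  finally show "r \<le> K" .
qed

lemma bopsI:
  assumes "\<And>x. x \<in> l2 \<Longrightarrow> T x \<in> l2"
    and "\<And>x y. x \<in> l2 \<Longrightarrow> y \<in> l2 \<Longrightarrow> T (\<lambda>i. x i + y i) = (\<lambda>i. T x i + T y i)"
    and "\<And>x c. x \<in> l2 \<Longrightarrow> T (\<lambda>i. c * x i) = (\<lambda>i. c * T x i)"
    and "\<And>x. x \<in> l2 \<Longrightarrow> l2norm (T x) \<le> K * l2norm x"
    and "\<And>x. x \<notin> l2 \<Longrightarrow> T x = (\<lambda>i. 0)"
  shows "T \<in> bops"
  unfolding bops_def using assms by blast

lemma idop_l2[simp]: "x \<in> l2 \<Longrightarrow> idop x = x" by (simp add: idop_def)

lemma idop_bops[simp]: "idop \<in> bops"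
proof (rule bopsI[where K=1])
  fix x y :: "'a \<Rightarrow> complex" and c assume x: "x \<in> l2" and y: "y \<in> l2"
  show "idop (\<lambda>i. x i + y i) = (\<lambda>i. idop x i + idop y i)" using x y l2_add[OF x y] by simp
  show "idop (\<lambda>i. c * x i) = (\<lambda>i. c * idop x i)" using x l2_scale[OF x] by simp
qed (auto simp: idop_def)

lemma zero_op_bops[simp]: "zero_op \<in> bops"
  by (rule bopsI[where K=0]) (auto simp: zero_op_def)

lemma op_add_bops[simp]:
  fixes S T :: "'i op"
  assumes S: "S \<in> bops" and T: "T \<in> bops"
  shows "op_add S T \<in> bops"
proof -
  have o: "opnorm S \<ge> 0" "opnorm T \<ge> 0" using opnorm_nonneg S T by auto
  show ?thesis
  proof (rule bopsI[where K="opnorm S + opnorm T"])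
    fix x :: "'i \<Rightarrow> complex" assume x: "x \<in> l2"
    show "op_add S T x \<in> l2" unfolding op_add_def using bops_l2[OF S x] bops_l2[OF T x] by (rule l2_add)
    have "l2norm (op_add S T x) \<le> l2norm (S x) + l2norm (T x)"
      unfolding op_add_def using bops_l2[OF S x] bops_l2[OF T x] by (rule l2norm_triangle)
    also have "\<dots> \<le> opnorm S * l2norm x + opnorm T * l2norm x"
      using x S T by (intro add_mono opnorm_bound)
    finally show "l2norm (op_add S T x) \<le> (opnorm S + opnorm T) * l2norm x" by (simp add: algebra_simps)
  next
    fix x y :: "'i \<Rightarrow> complex" assume x: "x \<in> l2" and y: "y \<in> l2"
    show "op_add S T (\<lambda>i. x i + y i) = (\<lambda>i. op_add S T x i + op_add S T y i)"
      unfolding op_add_def bops_add[OF S x y] bops_add[OF T x y] by (simp add: algebra_simps)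
  next
    fix x :: "'i \<Rightarrow> complex" and c assume x: "x \<in> l2"
    show "op_add S T (\<lambda>i. c * x i) = (\<lambda>i. c * op_add S T x i)"
      unfolding op_add_def bops_scale[OF S x] bops_scale[OF T x] by (simp add: algebra_simps)
  next
    fix x :: "'i \<Rightarrow> complex" assume x: "x \<notin> l2"
    show "op_add S T x = (\<lambda>i. 0)" unfolding op_add_def bops_out[OF S x] bops_out[OF T x] by simp
  qed
qed

lemma op_scale_bops[simp]:
  fixes T :: "'i op"
  assumes T: "T \<in> bops"
  shows "op_scale c T \<in> bops"
proof (rule bopsI[where K="cmod c * opnorm T"])
  fix x :: "'i \<Rightarrow> complex" assume x: "x \<in> l2"
  show "op_scale c T x \<in> l2" unfolding op_scale_def using bops_l2[OF T x] by (rule l2_scale)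
  have "l2norm (op_scale c T x) = cmod c * l2norm (T x)"
    unfolding op_scale_def using bops_l2[OF T x] by (rule l2norm_scale)
  also have "\<dots> \<le> cmod c * (opnorm T * l2norm x)"
    using x T by (intro mult_left_mono opnorm_bound) auto
  finally show "l2norm (op_scale c T x) \<le> cmod c * opnorm T * l2norm x" by (simp add: algebra_simps)
next
  fix x y :: "'i \<Rightarrow> complex" assume x: "x \<in> l2" and y: "y \<in> l2"
  show "op_scale c T (\<lambda>i. x i + y i) = (\<lambda>i. op_scale c T x i + op_scale c T y i)"
    unfolding op_scale_def bops_add[OF T x y] by (simp add: algebra_simps)
next
  fix x :: "'i \<Rightarrow> complex" and d assume x: "x \<in> l2"
  show "op_scale c T (\<lambda>i. d * x i) = (\<lambda>i. d * op_scale c T x i)"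
    unfolding op_scale_def bops_scale[OF T x] by (simp add: algebra_simps)
next
  fix x :: "'i \<Rightarrow> complex" assume x: "x \<notin> l2"
  show "op_scale c T x = (\<lambda>i. 0)" unfolding op_scale_def bops_out[OF T x] by simp
qed

lemma op_diff_alt: "op_diff S T = op_add S (op_scale (-1) T)"
  by (auto simp: op_diff_def op_add_def op_scale_def fun_eq_iff)

lemma op_diff_bops[simp]: "S \<in> bops \<Longrightarrow> T \<in> bops \<Longrightarrow> op_diff S T \<in> bops"
  by (simp add: op_diff_alt)

lemma op_comp_bops[simp]:
  fixes S T :: "'i op"
  assumes S: "S \<in> bops" and T: "T \<in> bops"
  shows "op_comp S T \<in> bops"
proof (rule bopsI[where K="opnorm S * opnorm T"])
  fix x :: "'i \<Rightarrow> complex" assume x: "x \<in> l2"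
  show "op_comp S T x \<in> l2" unfolding op_comp_def using bops_l2[OF S bops_l2[OF T x]] by simp
  have "l2norm (op_comp S T x) \<le> opnorm S * l2norm (T x)"
    unfolding op_comp_def using opnorm_bound[OF S bops_l2[OF T x]] by simp
  also have "\<dots> \<le> opnorm S * (opnorm T * l2norm x)"
    using x S T by (intro mult_left_mono opnorm_bound opnorm_nonneg) auto
  finally show "l2norm (op_comp S T x) \<le> opnorm S * opnorm T * l2norm x" by (simp add: algebra_simps)
next
  fix x y :: "'i \<Rightarrow> complex" assume x: "x \<in> l2" and y: "y \<in> l2"
  show "op_comp S T (\<lambda>i. x i + y i) = (\<lambda>i. op_comp S T x i + op_comp S T y i)"
    unfolding op_comp_def o_def bops_add[OF T x y] using bops_add[OF S bops_l2[OF T x] bops_l2[OF T y]] by simp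
next
  fix x :: "'i \<Rightarrow> complex" and c assume x: "x \<in> l2"
  show "op_comp S T (\<lambda>i. c * x i) = (\<lambda>i. c * op_comp S T x i)"
    unfolding op_comp_def o_def bops_scale[OF T x] using bops_scale[OF S bops_l2[OF T x]] by simp
next
  fix x :: "'i \<Rightarrow> complex" assume x: "x \<notin> l2"
  show "op_comp S T x = (\<lambda>i. 0)" unfolding op_comp_def o_def bops_out[OF T x] bops_zero[OF S] ..
qed

lemma opnorm_add:
  fixes S T :: "'i op"
  assumes "S \<in> bops" "T \<in> bops"
  shows "opnorm (op_add S T) \<le> opnorm S + opnorm T"
proof (rule opnorm_le)
  fix x :: "'i \<Rightarrow> complex" assume x: "x \<in> l2"
  have "l2norm (op_add S T x) \<le> l2norm (S x) + l2norm (T x)"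
    unfolding op_add_def using bops_l2[OF assms(1) x] bops_l2[OF assms(2) x] by (rule l2norm_triangle)
  also have "\<dots> \<le> opnorm S * l2norm x + opnorm T * l2norm x"
    using x assms by (intro add_mono opnorm_bound)
  finally show "l2norm (op_add S T x) \<le> (opnorm S + opnorm T) * l2norm x" by (simp add: algebra_simps)
qed (use opnorm_nonneg[OF assms(1)] opnorm_nonneg[OF assms(2)] in simp)

lemma opnorm_scale:
  fixes T :: "'i op"
  assumes "T \<in> bops"
  shows "opnorm (op_scale c T) \<le> cmod c * opnorm T"
proof (rule opnorm_le)
  fix x :: "'i \<Rightarrow> complex" assume x: "x \<in> l2"
  have "l2norm (op_scale c T x) = cmod c * l2norm (T x)"
    unfolding op_scale_def using bops_l2[OF assms x] by (rule l2norm_scale)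
  also have "\<dots> \<le> cmod c * (opnorm T * l2norm x)"
    using x assms by (intro mult_left_mono opnorm_bound) auto
  finally show "l2norm (op_scale c T x) \<le> cmod c * opnorm T * l2norm x" by (simp add: algebra_simps)
qed (use opnorm_nonneg[OF assms] in simp)

lemma opnorm_comp:
  fixes S T :: "'i op"
  assumes "S \<in> bops" "T \<in> bops"
  shows "opnorm (op_comp S T) \<le> opnorm S * opnorm T"
proof (rule opnorm_le)
  fix x :: "'i \<Rightarrow> complex" assume x: "x \<in> l2"
  have "l2norm (op_comp S T x) \<le> opnorm S * l2norm (T x)"
    unfolding op_comp_def using opnorm_bound[OF assms(1) bops_l2[OF assms(2) x]] by simp
  also have "\<dots> \<le> opnorm S * (opnorm T * l2norm x)"
    using x assms by (intro mult_left_mono opnorm_bound opnorm_nonneg) auto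
  finally show "l2norm (op_comp S T x) \<le> opnorm S * opnorm T * l2norm x" by (simp add: algebra_simps)
qed (use opnorm_nonneg[OF assms(1)] opnorm_nonneg[OF assms(2)] in simp)

lemma opnorm_diff_le:
  assumes "S \<in> bops" "T \<in> bops"
  shows "opnorm (op_diff S T) \<le> opnorm S + opnorm T"
  using opnorm_add[OF assms(1) op_scale_bops[OF assms(2), of "-1"]] opnorm_scale[OF assms(2), of "-1"]
  by (simp add: op_diff_alt)

lemma opnorm_zero[simp]: "opnorm (zero_op :: 'i op) = 0"
proof -
  have "opnorm (zero_op :: 'i op) \<le> 0" by (rule opnorm_le) (auto simp: zero_op_def)
  thus ?thesis using opnorm_nonneg[OF zero_op_bops, where 'a='i] by linarith
qed

lemma op_diff_self[simp]: "op_diff T T = zero_op"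
  by (simp add: op_diff_def zero_op_def fun_eq_iff)

definition trunc :: "'i set \<Rightarrow> ('i \<Rightarrow> complex) \<Rightarrow> 'i \<Rightarrow> complex" where
  "trunc F x = (\<lambda>i. if i \<in> F then x i else 0)"

lemma trunc_l2: "finite F \<Longrightarrow> trunc F x \<in> l2"
  by (rule l2_finite_support) (rule finite_subset[of _ F], auto simp: trunc_def)

lemma trunc_sum:
  assumes F: "finite F"
  shows "trunc F x = (\<lambda>j. \<Sum>i\<in>F. x i * ket i j)"
proof
  fix j
  have "(\<Sum>i\<in>F. x i * ket i j) = (\<Sum>i\<in>F. if i = j then x j else 0)"
    by (rule sum.cong) (auto simp: ket_def)
  also have "\<dots> = (if j \<in> F then x j else 0)" using F by (rule sum.delta)
  finally show "trunc F x j = (\<Sum>i\<in>F. x i * ket i j)" by (simp add: trunc_def)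
qed

lemma bops_trunc:
  assumes "T \<in> bops" "finite F"
  shows "T (trunc F x) = (\<lambda>j. \<Sum>i\<in>F. x i * T (ket i) j)"
proof -
  have "T (trunc F x) = T (\<lambda>j. \<Sum>i\<in>F. x i * ket i j)" using trunc_sum[OF assms(2)] by simp
  also have "\<dots> = (\<lambda>j. \<Sum>i\<in>F. T (\<lambda>j. x i * ket i j) j)"
    using assms by (intro bops_sum l2_scale) auto
  also have "\<dots> = (\<lambda>j. \<Sum>i\<in>F. x i * T (ket i) j)"
    using assms by (simp add: bops_scale[OF assms(1)])
  finally show ?thesis .
qed

lemma trunc_tendsto:
  assumes x: "x \<in> l2"
  shows "((\<lambda>F. l2norm (\<lambda>i. x i - trunc F x i)) \<longlongrightarrow> 0) (finite_subsets_at_top UNIV)"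
proof -
  define S where "S = (\<Sum>\<^sub>\<infinity>i. (cmod (x i))^2)"
  have hs: "((\<lambda>i. (cmod (x i))^2) has_sum S) UNIV" using x unfolding S_def l2_def by simp
  have eq: "l2norm (\<lambda>i. x i - trunc F x i) = sqrt (S - (\<Sum>i\<in>F. (cmod (x i))^2))" if F: "finite F" for F
  proof -
    have a: "(\<lambda>i. (cmod (x i - trunc F x i))^2) = (\<lambda>i. if i \<in> F then 0 else (cmod (x i))^2)"
      by (auto simp: trunc_def)
    have b: "(\<lambda>i. (cmod (x i))^2) = (\<lambda>i. (if i \<in> F then 0 else (cmod (x i))^2) + (if i \<in> F then (cmod (x i))^2 else 0))"
      by auto
    have s1: "(\<lambda>i. if i \<in> F then 0 else (cmod (x i))^2) summable_on UNIV"
    proof -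
      have "(\<lambda>i. (cmod (x i - trunc F x i))^2) summable_on UNIV"
        using l2_diff[OF x trunc_l2[OF F, of x]] by (simp add: l2_def)
      thus ?thesis using a by simp
    qed
    have s2: "(\<lambda>i. if i \<in> F then (cmod (x i))^2 else 0) summable_on UNIV"
      by (rule finite_nonzero_values_imp_summable_on) (rule finite_subset[OF _ F], auto)
    have i2: "(\<Sum>\<^sub>\<infinity>i. if i \<in> F then (cmod (x i))^2 else 0) = (\<Sum>i\<in>F. (cmod (x i))^2)"
    proof -
      have "(\<Sum>\<^sub>\<infinity>i. if i \<in> F then (cmod (x i))^2 else 0) = (\<Sum>\<^sub>\<infinity>i\<in>F. if i \<in> F then (cmod (x i))^2 else 0)"
        by (rule infsum_cong_neutral) auto
      also have "\<dots> = (\<Sum>i\<in>F. (cmod (x i))^2)" using F by simp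
      finally show ?thesis .
    qed
    have "S = (\<Sum>\<^sub>\<infinity>i. if i \<in> F then 0 else (cmod (x i))^2) + (\<Sum>i\<in>F. (cmod (x i))^2)"
      unfolding S_def by (subst b) (simp only: infsum_add[OF s1 s2] i2)
    thus ?thesis unfolding l2norm_def a by simp
  qed
  have "((\<lambda>F. sqrt (S - (\<Sum>i\<in>F. (cmod (x i))^2))) \<longlongrightarrow> sqrt (S - S)) (finite_subsets_at_top UNIV)"
    using hs unfolding has_sum_def by (intro tendsto_intros)
  hence "((\<lambda>F. sqrt (S - (\<Sum>i\<in>F. (cmod (x i))^2))) \<longlongrightarrow> 0) (finite_subsets_at_top UNIV)" by simp
  thus ?thesis
    by (rule Lim_transform_eventually) (auto intro!: eventually_finite_subsets_at_top_weakI simp: eq)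
qed

lemma l2_component_le_l2norm: "x \<in> l2 \<Longrightarrow> cmod (x i) \<le> l2norm x"
proof -
  assume x: "x \<in> l2"
  have "(\<Sum>j\<in>{i}. (cmod (x j))^2) \<le> (\<Sum>\<^sub>\<infinity>j. (cmod (x j))^2)"
    by (rule finite_sum_le_infsum) (use x in \<open>auto simp: l2_def\<close>)
  hence "(cmod (x i))^2 \<le> (l2norm x)^2" by (simp add: l2norm_sq)
  thus ?thesis by (rule power2_le_imp_le) simp
qed

lemma bops_trunc_tendsto:
  assumes T: "T \<in> bops" and x: "x \<in> l2"
  shows "((\<lambda>F. l2norm (\<lambda>j. T x j - T (trunc F x) j)) \<longlongrightarrow> 0) (finite_subsets_at_top UNIV)"
proof (rule Lim_null_comparison)
  show "((\<lambda>F. opnorm T * l2norm (\<lambda>j. x j - trunc F x j)) \<longlongrightarrow> 0) (finite_subsets_at_top UNIV)"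
    using tendsto_mult_left[OF trunc_tendsto[OF x]] by simp
  show "\<forall>\<^sub>F F in finite_subsets_at_top UNIV.
      norm (l2norm (\<lambda>j. T x j - T (trunc F x) j)) \<le> opnorm T * l2norm (\<lambda>j. x j - trunc F x j)"
  proof (rule eventually_finite_subsets_at_top_weakI)
    fix F :: "'a set" assume F: "finite F"
    have "(\<lambda>j. T x j - T (trunc F x) j) = T (\<lambda>j. x j - trunc F x j)"
      by (simp add: bops_diff[OF T x trunc_l2[OF F]])
    thus "norm (l2norm (\<lambda>j. T x j - T (trunc F x) j)) \<le> opnorm T * l2norm (\<lambda>j. x j - trunc F x j)"
      using opnorm_bound[OF T l2_diff[OF x trunc_l2[OF F]]] by simp
  qed
qed

lemma bops_trunc_tendsto_component:
  assumes T: "T \<in> bops" and x: "x \<in> l2"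
  shows "((\<lambda>F. T (trunc F x) j) \<longlongrightarrow> T x j) (finite_subsets_at_top UNIV)"
proof (rule LIM_zero_cancel, rule Lim_null_comparison[OF _ bops_trunc_tendsto[OF T x]])
  show "\<forall>\<^sub>F F in finite_subsets_at_top UNIV. norm (T (trunc F x) j - T x j) \<le> l2norm (\<lambda>j. T x j - T (trunc F x) j)"
    using l2_component_le_l2norm[OF l2_diff[OF bops_l2[OF T x] bops_l2[OF T trunc_l2]]]
    by (auto intro!: eventually_finite_subsets_at_top_weakI simp: norm_minus_commute)
qed

lemma bops_eqI_ket:
  assumes S: "S \<in> bops" and T: "T \<in> bops" and eq: "\<And>i. S (ket i) = T (ket i)"
  shows "S = T"
proof
  fix x
  show "S x = T x"
  proof (cases "x \<in> l2")
    case False thus ?thesis using bops_out[OF S False] bops_out[OF T False] by simp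
  next
    case x: True
    show ?thesis
    proof
      fix j
      have "S (trunc F x) j = T (trunc F x) j" if "finite F" for F
        using bops_trunc[OF S that] bops_trunc[OF T that] eq by simp
      hence "((\<lambda>F. S (trunc F x) j) \<longlongrightarrow> T x j) (finite_subsets_at_top UNIV)"
        by (intro Lim_transform_eventually[OF bops_trunc_tendsto_component[OF T x]])
          (auto intro!: eventually_finite_subsets_at_top_weakI)
      thus "S x j = T x j"
        using tendsto_unique[OF finite_subsets_at_top_neq_bot bops_trunc_tendsto_component[OF S x]] by blast
    qed
  qed
qed

section \<open>The adjoint\<close>

definition adj_explicit :: "'i op \<Rightarrow> 'i op" where
  "adj_explicit T y = (if y \<in> l2 then (\<lambda>i. l2inner (T (ket i)) y) else (\<lambda>i. 0))"

lemma l2norm_trunc: "finite F \<Longrightarrow> l2norm (trunc F x) = sqrt (\<Sum>i\<in>F. (cmod (x i))^2)"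
proof -
  assume F: "finite F"
  have "(\<Sum>\<^sub>\<infinity>i. (cmod (trunc F x i))^2) = (\<Sum>\<^sub>\<infinity>i\<in>F. (cmod (trunc F x i))^2)"
    by (rule infsum_cong_neutral) (auto simp: trunc_def)
  also have "\<dots> = (\<Sum>i\<in>F. (cmod (x i))^2)" using F by (simp add: trunc_def)
  finally show ?thesis unfolding l2norm_def by simp
qed

lemma le_mult_sqrt_imp_le_square:
  fixes s K :: real
  assumes s: "0 \<le> s" and le: "s \<le> K * sqrt s"
  shows "s \<le> K^2"
proof (cases "s = 0")
  case False
  hence pos: "sqrt s > 0" using s by simp
  have "sqrt s * sqrt s \<le> K * sqrt s" using le s by simp
  hence "sqrt s \<le> K" by (rule mult_right_le_imp_le[OF _ pos])
  hence "(sqrt s)^2 \<le> K^2" using pos by (intro power_mono) auto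
  thus ?thesis using s by simp
qed simp

text \<open>For \<open>v\<close> the truncation to \<open>F\<close> of \<open>z i = \<langle>T e\<^sub>i, y\<rangle>\<close> one has \<open>\<langle>y, T v\<rangle> = \<parallel>v\<parallel>\<^sup>2\<close>,
  so Cauchy-Schwarz gives \<open>\<parallel>v\<parallel> \<le> \<parallel>T\<parallel> \<parallel>y\<parallel>\<close>.\<close>

lemma adj_explicit_partial_sums_le:
  assumes T: "T \<in> bops" and y: "y \<in> l2" and F: "finite F"
  shows "(\<Sum>i\<in>F. (cmod (l2inner (T (ket i)) y))^2) \<le> (opnorm T * l2norm y)^2"
proof -
  define z where "z i = l2inner (T (ket i)) y" for i
  define s where "s = (\<Sum>i\<in>F. (cmod (z i))^2)"
  have vl: "trunc F z \<in> l2" using F by (rule trunc_l2)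
  have "l2inner y (T (trunc F z)) = (\<Sum>i\<in>F. l2inner y (\<lambda>j. z i * T (ket i) j))"
    unfolding bops_trunc[OF T F] using y F by (intro l2inner_sum_right l2_scale bops_l2[OF T]) auto
  also have "\<dots> = (\<Sum>i\<in>F. z i * cnj (z i))"
    by (simp add: l2inner_scale_right z_def l2inner_cnj)
  also have "\<dots> = complex_of_real s"
    unfolding s_def by (simp only: of_real_sum complex_norm_square)
  finally have e1: "l2inner y (T (trunc F z)) = complex_of_real s" .
  have s0: "0 \<le> s" unfolding s_def by (simp add: sum_nonneg)
  have "s = cmod (l2inner y (T (trunc F z)))" using e1 s0 by simp
  also have "\<dots> \<le> l2norm y * l2norm (T (trunc F z))" by (rule l2inner_Cauchy_Schwarz[OF y bops_l2[OF T vl]])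
  also have "\<dots> \<le> l2norm y * (opnorm T * sqrt s)"
    using opnorm_bound[OF T vl] by (intro mult_left_mono) (simp_all add: l2norm_trunc[OF F] s_def)
  finally have "s \<le> (opnorm T * l2norm y) * sqrt s" by (simp add: algebra_simps)
  thus ?thesis unfolding s_def z_def by (rule le_mult_sqrt_imp_le_square[OF s0[unfolded s_def z_def]])
qed

lemma adj_explicit_l2:
  fixes T :: "'i op"
  assumes T: "T \<in> bops"
  shows "adj_explicit T y \<in> l2"
proof (cases "y \<in> l2")
  case True
  have "bdd_above (sum (\<lambda>i. (cmod (l2inner (T (ket i)) y))^2) ` {F. F \<subseteq> UNIV \<and> finite F})"
  proof (rule bdd_aboveI2[where M="(opnorm T * l2norm y)^2"])
    fix F :: "'i set" assume "F \<in> {F. F \<subseteq> UNIV \<and> finite F}"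
    hence "finite F" by simp
    thus "(\<Sum>i\<in>F. (cmod (l2inner (T (ket i)) y))^2) \<le> (opnorm T * l2norm y)^2" by (rule adj_explicit_partial_sums_le[OF T True])
  qed
  hence "(\<lambda>i. (cmod (l2inner (T (ket i)) y))^2) summable_on UNIV"
    by (rule nonneg_bdd_above_summable_on[rotated]) simp
  thus ?thesis using True by (simp add: adj_explicit_def l2_def)
next
  case False thus ?thesis by (simp add: adj_explicit_def)
qed

lemma adj_explicit_norm:
  fixes T :: "'i op"
  assumes T: "T \<in> bops" and y: "y \<in> l2"
  shows "l2norm (adj_explicit T y) \<le> opnorm T * l2norm y"
proof -
  have e: "adj_explicit T y = (\<lambda>i. l2inner (T (ket i)) y)" using y by (simp add: adj_explicit_def)
  have sm: "(\<lambda>i. (cmod (adj_explicit T y i))^2) summable_on UNIV" using adj_explicit_l2[OF T, of y] by (simp add: l2_def)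
  have "(\<Sum>\<^sub>\<infinity>i. (cmod (adj_explicit T y i))^2) \<le> (opnorm T * l2norm y)^2"
  proof (rule infsum_le_finite_sums[OF sm])
    fix F :: "'i set" assume F: "finite F" "F \<subseteq> UNIV"
    show "(\<Sum>i\<in>F. (cmod (adj_explicit T y i))^2) \<le> (opnorm T * l2norm y)^2"
      unfolding e by (rule adj_explicit_partial_sums_le[OF T y F(1)])
  qed
  hence "(l2norm (adj_explicit T y))^2 \<le> (opnorm T * l2norm y)^2" by (simp add: l2norm_sq)
  thus ?thesis by (rule power2_le_imp_le) (simp add: opnorm_nonneg[OF T])
qed

lemma adj_explicit_inner:
  fixes T :: "'i op"
  assumes T: "T \<in> bops" and x: "x \<in> l2" and y: "y \<in> l2"
  shows "l2inner (adj_explicit T y) x = l2inner y (T x)"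
proof -
  define f where "f i = l2inner y (T (ket i)) * x i" for i
  have eqF: "sum f F = l2inner y (T (trunc F x))" if F: "finite F" for F
  proof -
    have "l2inner y (T (trunc F x)) = (\<Sum>i\<in>F. l2inner y (\<lambda>j. x i * T (ket i) j))"
      unfolding bops_trunc[OF T F] using y F by (intro l2inner_sum_right l2_scale bops_l2[OF T]) auto
    also have "\<dots> = sum f F" by (simp add: l2inner_scale_right f_def mult.commute)
    finally show ?thesis by simp
  qed
  have "((\<lambda>F. l2inner y (T (trunc F x))) \<longlongrightarrow> l2inner y (T x)) (finite_subsets_at_top UNIV)"
  proof (rule LIM_zero_cancel, rule Lim_null_comparison)
    show "((\<lambda>F. l2norm y * l2norm (\<lambda>j. T x j - T (trunc F x) j)) \<longlongrightarrow> 0) (finite_subsets_at_top UNIV)"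
      using tendsto_mult_left[OF bops_trunc_tendsto[OF T x]] by simp
    show "\<forall>\<^sub>F F in finite_subsets_at_top UNIV.
        norm (l2inner y (T (trunc F x)) - l2inner y (T x)) \<le> l2norm y * l2norm (\<lambda>j. T x j - T (trunc F x) j)"
    proof (rule eventually_finite_subsets_at_top_weakI)
      fix F :: "'i set" assume F: "finite F"
      have "l2inner y (T (trunc F x)) - l2inner y (T x) = - l2inner y (\<lambda>j. T x j - T (trunc F x) j)"
        by (simp add: l2inner_diff_right[OF y bops_l2[OF T x] bops_l2[OF T trunc_l2[OF F]]])
      thus "norm (l2inner y (T (trunc F x)) - l2inner y (T x)) \<le> l2norm y * l2norm (\<lambda>j. T x j - T (trunc F x) j)"
        using l2inner_Cauchy_Schwarz[OF y l2_diff[OF bops_l2[OF T x] bops_l2[OF T trunc_l2[OF F]]]] by simp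
    qed
  qed
  hence "(sum f \<longlongrightarrow> l2inner y (T x)) (finite_subsets_at_top UNIV)"
    by (rule Lim_transform_eventually) (auto intro!: eventually_finite_subsets_at_top_weakI simp: eqF)
  hence "(f has_sum l2inner y (T x)) UNIV" unfolding has_sum_def .
  hence "infsum f UNIV = l2inner y (T x)" by (rule infsumI)
  moreover have "l2inner (adj_explicit T y) x = infsum f UNIV"
  proof -
    have "l2inner (adj_explicit T y) x = (\<Sum>\<^sub>\<infinity>i. cnj (adj_explicit T y i) * x i)" by (simp only: l2inner_def)
    moreover have "cnj (adj_explicit T y i) = l2inner y (T (ket i))" for i
      using y by (simp add: adj_explicit_def l2inner_cnj)
    ultimately show ?thesis by (simp add: f_def[abs_def])
  qed
  ultimately show ?thesis by simp
qed

lemma adj_explicit_bops: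
  fixes T :: "'i op"
  assumes T: "T \<in> bops"
  shows "adj_explicit T \<in> bops"
proof (rule bopsI[where K="opnorm T"])
  fix x y :: "'i \<Rightarrow> complex" assume x: "x \<in> l2" and y: "y \<in> l2"
  show "adj_explicit T (\<lambda>i. x i + y i) = (\<lambda>i. adj_explicit T x i + adj_explicit T y i)"
    using x y by (auto simp: adj_explicit_def l2_add l2inner_add_right bops_l2[OF T])
next
  fix x :: "'i \<Rightarrow> complex" and c assume x: "x \<in> l2"
  show "adj_explicit T (\<lambda>i. c * x i) = (\<lambda>i. c * adj_explicit T x i)"
    using x T by (auto simp: adj_explicit_def l2_scale l2inner_scale_right)
next
  fix x :: "'i \<Rightarrow> complex" assume x: "x \<in> l2"
  show "l2norm (adj_explicit T x) \<le> opnorm T * l2norm x" by (rule adj_explicit_norm[OF T x])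
next
  fix x :: "'i \<Rightarrow> complex" assume x: "x \<notin> l2"
  show "adj_explicit T x = (\<lambda>i. 0)" using x by (simp add: adj_explicit_def)
qed (rule adj_explicit_l2[OF T])

lemma adj_eq_explicit:
  fixes T :: "'i op"
  assumes T: "T \<in> bops"
  shows "adj T = adj_explicit T"
  unfolding adj_def
proof (rule the_equality)
  show "adj_explicit T \<in> bops \<and> (\<forall>x\<in>l2. \<forall>y\<in>l2. l2inner (adj_explicit T y) x = l2inner y (T x))"
    using adj_explicit_bops[OF T] adj_explicit_inner[OF T] by auto
next
  fix S assume S: "S \<in> bops \<and> (\<forall>x\<in>l2. \<forall>y\<in>l2. l2inner (S y) x = l2inner y (T x))"
  show "S = adj_explicit T"
  proof
    fix y show "S y = adj_explicit T y"
    proof (cases "y \<in> l2")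
      case False thus ?thesis using S bops_out[of S y] by (simp add: adj_explicit_def)
    next
      case True
      show ?thesis
      proof
        fix i
        have "cnj (S y i) = l2inner y (T (ket i))" using S True l2_ket[of i]
          by (metis l2inner_ket_right)
        hence "S y i = cnj (l2inner y (T (ket i)))" by (metis complex_cnj_cnj)
        thus "S y i = adj_explicit T y i" using True by (simp add: adj_explicit_def l2inner_cnj)
      qed
    qed
  qed
qed

lemma adj_bops[simp]: "T \<in> bops \<Longrightarrow> adj T \<in> bops"
  by (simp add: adj_eq_explicit adj_explicit_bops)

lemma adj_inner: "T \<in> bops \<Longrightarrow> x \<in> l2 \<Longrightarrow> y \<in> l2 \<Longrightarrow> l2inner (adj T y) x = l2inner y (T x)"
  by (simp add: adj_eq_explicit adj_explicit_inner)

lemma adj_opnorm: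
  fixes T :: "'i op"
  assumes T: "T \<in> bops"
  shows "opnorm (adj T) \<le> opnorm T"
  using T by (intro opnorm_le) (auto simp: adj_eq_explicit adj_explicit_norm opnorm_nonneg)

lemma adj_ket:
  fixes T :: "'i op"
  assumes T: "T \<in> bops"
  shows "adj T (ket p) i = cnj (T (ket i) p)"
  using T by (simp add: adj_eq_explicit adj_explicit_def l2inner_ket_right)

lemma adj_eqI_ket:
  fixes S T :: "'i op"
  assumes T: "T \<in> bops" and S: "S \<in> bops" and h: "\<And>p i. S (ket p) i = cnj (T (ket i) p)"
  shows "adj T = S"
  by (rule bops_eqI_ket) (use T S h in \<open>auto simp: adj_ket fun_eq_iff\<close>)

lemma adj_eqI:
  fixes S T :: "'i op"
  assumes T: "T \<in> bops" and S: "S \<in> bops" and h: "\<And>x y. x \<in> l2 \<Longrightarrow> y \<in> l2 \<Longrightarrow> l2inner (S y) x = l2inner y (T x)"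
  shows "adj T = S"
proof (rule adj_eqI_ket[OF T S])
  fix p i
  have "cnj (S (ket p) i) = l2inner (S (ket p)) (ket i)" by (simp add: l2inner_ket_right)
  also have "\<dots> = l2inner (ket p) (T (ket i))" by (rule h) simp_all
  also have "\<dots> = T (ket i) p" by (simp add: l2inner_ket_left)
  finally show "S (ket p) i = cnj (T (ket i) p)" by (metis complex_cnj_cnj)
qed

lemma adj_adj:
  fixes T :: "'i op"
  assumes T: "T \<in> bops"
  shows "adj (adj T) = T"
  by (rule adj_eqI_ket[OF adj_bops[OF T] T]) (simp add: adj_ket[OF T])

lemma adj_comp:
  fixes S T :: "'i op"
  assumes S: "S \<in> bops" and T: "T \<in> bops"
  shows "adj (op_comp S T) = op_comp (adj T) (adj S)"
proof (rule adj_eqI)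
  show "op_comp S T \<in> bops" using S T by simp
  show "op_comp (adj T) (adj S) \<in> bops" using S T by simp
  fix x y :: "'i \<Rightarrow> complex" assume x: "x \<in> l2" and y: "y \<in> l2"
  have "l2inner (adj T (adj S y)) x = l2inner (adj S y) (T x)"
    by (rule adj_inner[OF T x]) (rule bops_l2[OF adj_bops[OF S] y])
  also have "\<dots> = l2inner y (S (T x))" by (rule adj_inner[OF S bops_l2[OF T x] y])
  finally show "l2inner (op_comp (adj T) (adj S) y) x = l2inner y (op_comp S T x)"
    by (simp add: op_comp_def)
qed

lemma adj_add:
  fixes S T :: "'i op"
  assumes S: "S \<in> bops" and T: "T \<in> bops"
  shows "adj (op_add S T) = op_add (adj S) (adj T)"
  by (rule adj_eqI_ket) (use S T in \<open>simp_all add: op_add_def adj_ket\<close>)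

lemma adj_diff:
  fixes S T :: "'i op"
  assumes S: "S \<in> bops" and T: "T \<in> bops"
  shows "adj (op_diff S T) = op_diff (adj S) (adj T)"
  by (rule adj_eqI_ket) (use S T in \<open>simp_all add: op_diff_def adj_ket\<close>)

lemma adj_idop: "adj (idop :: 'i op) = idop"
proof (rule adj_eqI_ket)
  fix p i :: 'i
  show "idop (ket p) i = cnj (idop (ket i) p)" by (simp add: idop_l2[OF l2_ket]) (simp add: ket_def)
qed simp_all

lemma op_comp_idop_right:
  fixes S :: "'i op"
  assumes S: "S \<in> bops"
  shows "op_comp S idop = S"
proof
  fix x show "op_comp S idop x = S x"
    using S bops_out[OF S, of x] bops_zero[OF S] by (cases "x \<in> l2") (simp_all add: op_comp_def idop_def)
qed

lemma op_comp_idop_left: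
  fixes S :: "'i op"
  assumes S: "S \<in> bops"
  shows "op_comp idop S = S"
proof
  fix x show "op_comp idop S x = S x"
  proof (cases "x \<in> l2")
    case True thus ?thesis using bops_l2[OF S True] by (simp add: op_comp_def)
  next
    case False thus ?thesis using bops_out[OF S False] by (simp add: op_comp_def idop_def)
  qed
qed

lemma op_comp_assoc: "op_comp (op_comp R S) T = op_comp R (op_comp S T)"
  by (simp add: op_comp_def o_assoc)

lemma op_add_zero_left: "op_add zero_op T = T"
  by (simp add: op_add_def zero_op_def fun_eq_iff)

lemma op_add_zero_right: "op_add T zero_op = T"
  by (simp add: op_add_def zero_op_def fun_eq_iff)

lemma op_add_assoc: "op_add (op_add R S) T = op_add R (op_add S T)"
  by (simp add: op_add_def fun_eq_iff algebra_simps)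

lemma op_comp_add_left: "op_comp (op_add S T) R = op_add (op_comp S R) (op_comp T R)"
  by (simp add: op_add_def op_comp_def fun_eq_iff)

lemma op_comp_add_right:
  fixes R :: "'i op"
  assumes R: "R \<in> bops" and S: "S \<in> bops" and T: "T \<in> bops"
  shows "op_comp R (op_add S T) = op_add (op_comp R S) (op_comp R T)"
proof
  fix x :: "'i \<Rightarrow> complex"
  show "op_comp R (op_add S T) x = op_add (op_comp R S) (op_comp R T) x"
  proof (cases "x \<in> l2")
    case True
    show ?thesis unfolding op_comp_def op_add_def o_def
      by (rule bops_add[OF R bops_l2[OF S True] bops_l2[OF T True]])
  next
    case False
    show ?thesis unfolding op_comp_def op_add_def o_def bops_out[OF S False] bops_out[OF T False]
      using bops_zero[OF R] by simp
  qed
qed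

lemma op_comp_scale_left: "op_comp (op_scale c S) R = op_scale c (op_comp S R)"
  by (simp add: op_scale_def op_comp_def fun_eq_iff)

lemma op_comp_scale_right:
  fixes R :: "'i op"
  assumes R: "R \<in> bops" and S: "S \<in> bops"
  shows "op_comp R (op_scale c S) = op_scale c (op_comp R S)"
proof
  fix x :: "'i \<Rightarrow> complex"
  show "op_comp R (op_scale c S) x = op_scale c (op_comp R S) x"
  proof (cases "x \<in> l2")
    case True
    show ?thesis unfolding op_comp_def op_scale_def o_def
      by (rule bops_scale[OF R bops_l2[OF S True]])
  next
    case False
    show ?thesis unfolding op_comp_def op_scale_def o_def bops_out[OF S False]
      using bops_zero[OF R] by simp
  qed
qed

section \<open>Tensor products of operators\<close>

definition vec_tensor :: "('i \<Rightarrow> complex) \<Rightarrow> ('j \<Rightarrow> complex) \<Rightarrow> ('i \<times> 'j \<Rightarrow> complex)" where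
  "vec_tensor u v = (\<lambda>(i, j). u i * v j)"

definition vec_swap :: "('i \<times> 'j \<Rightarrow> complex) \<Rightarrow> ('j \<times> 'i \<Rightarrow> complex)" where
  "vec_swap x = (\<lambda>(j, i). x (i, j))"

definition op_rows :: "'j op \<Rightarrow> ('i \<times> 'j \<Rightarrow> complex) \<Rightarrow> ('i \<times> 'j \<Rightarrow> complex)" where
  "op_rows T x = (\<lambda>(i, j). T (\<lambda>j'. x (i, j')) j)"

lemma l2_summable_Sigma:
  fixes x :: "'i \<times> 'j \<Rightarrow> complex"
  assumes x: "x \<in> l2"
  shows "(\<lambda>(i,j). (cmod (x (i,j)))^2) summable_on (Sigma UNIV (\<lambda>_. UNIV))"
proof -
  have e: "(\<lambda>(i,j). (cmod (x (i,j)))^2) = (\<lambda>p. (cmod (x p))^2)" by (auto simp: fun_eq_iff)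
  show ?thesis unfolding e using x by (simp add: l2_def)
qed

lemma l2_row:
  fixes x :: "'i \<times> 'j \<Rightarrow> complex"
  assumes x: "x \<in> l2"
  shows "(\<lambda>j. x (i, j)) \<in> l2"
proof -
  have "(\<lambda>j. (\<lambda>i j. (cmod (x (i,j)))^2) i j) summable_on UNIV"
    by (rule summable_on_SigmaD1[where A=UNIV and B="\<lambda>_. UNIV"]) (use l2_summable_Sigma[OF x] in simp_all)
  thus ?thesis by (simp add: l2_def)
qed

lemma l2norm_rows:
  fixes x :: "'i \<times> 'j \<Rightarrow> complex"
  assumes x: "x \<in> l2"
  shows "(\<lambda>i. (l2norm (\<lambda>j. x (i, j)))^2) summable_on UNIV"
    and "(l2norm x)^2 = (\<Sum>\<^sub>\<infinity>i. (l2norm (\<lambda>j. x (i, j)))^2)"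
proof -
  have s: "(\<lambda>(i,j). (cmod (x (i,j)))^2) summable_on (Sigma UNIV (\<lambda>_. UNIV))" by (rule l2_summable_Sigma[OF x])
  have e: "(\<lambda>i. (l2norm (\<lambda>j. x (i, j)))^2) = (\<lambda>i. \<Sum>\<^sub>\<infinity>j. (cmod (x (i,j)))^2)"
    by (simp add: l2norm_sq)
  show "(\<lambda>i. (l2norm (\<lambda>j. x (i, j)))^2) summable_on UNIV"
    unfolding e using summable_on_Sigma_banach[OF s] by simp
  have "(\<Sum>\<^sub>\<infinity>i. \<Sum>\<^sub>\<infinity>j. (cmod (x (i,j)))^2) = (\<Sum>\<^sub>\<infinity>(i,j)\<in>Sigma UNIV (\<lambda>_. UNIV). (cmod (x (i,j)))^2)"
    using infsum_Sigma'_banach[OF s] by simp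
  also have "\<dots> = (l2norm x)^2"
  proof -
    have e: "(\<lambda>(i,j). (cmod (x (i,j)))^2) = (\<lambda>p. (cmod (x p))^2)" by (auto simp: fun_eq_iff)
    show ?thesis unfolding e by (simp add: l2norm_sq)
  qed
  finally show "(l2norm x)^2 = (\<Sum>\<^sub>\<infinity>i. (l2norm (\<lambda>j. x (i, j)))^2)" unfolding e by simp
qed

lemma l2_from_rows:
  fixes y :: "'i \<times> 'j \<Rightarrow> complex"
  assumes r: "\<And>i. (\<lambda>j. y (i, j)) \<in> l2" and s: "(\<lambda>i. (l2norm (\<lambda>j. y (i, j)))^2) summable_on UNIV"
  shows "y \<in> l2"
proof -
  have "(\<lambda>p. (cmod (y p))^2) summable_on Sigma UNIV (\<lambda>_. UNIV)"
  proof (rule summable_on_SigmaI[where g="\<lambda>i. (l2norm (\<lambda>j. y (i, j)))^2"])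
    fix i
    have "(\<lambda>j. (cmod (y (i,j)))^2) summable_on UNIV" using r[of i] by (simp add: l2_def)
    thus "((\<lambda>j. (cmod (y (i,j)))^2) has_sum (l2norm (\<lambda>j. y (i, j)))^2) UNIV"
      by (simp add: l2norm_sq)
  qed (use s in simp_all)
  thus ?thesis by (simp add: l2_def)
qed

lemma op_rows_l2:
  fixes T :: "'j op" and x :: "'i \<times> 'j \<Rightarrow> complex"
  assumes T: "T \<in> bops" and x: "x \<in> l2"
  shows "op_rows T x \<in> l2" and "l2norm (op_rows T x) \<le> opnorm T * l2norm x"
proof -
  define y where "y = op_rows T x"
  have row: "(\<lambda>j. y (i, j)) = T (\<lambda>j. x (i, j))" for i by (simp add: y_def op_rows_def)
  have rl: "(\<lambda>j. y (i, j)) \<in> l2" for i unfolding row by (rule bops_l2[OF T l2_row[OF x]])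
  have le: "(l2norm (\<lambda>j. y (i, j)))^2 \<le> (opnorm T)^2 * (l2norm (\<lambda>j. x (i, j)))^2" for i
  proof -
    have "l2norm (\<lambda>j. y (i, j)) \<le> opnorm T * l2norm (\<lambda>j. x (i, j))"
      unfolding row by (rule opnorm_bound[OF T l2_row[OF x]])
    hence "(l2norm (\<lambda>j. y (i, j)))^2 \<le> (opnorm T * l2norm (\<lambda>j. x (i, j)))^2"
      by (rule power_mono) simp
    thus ?thesis by (simp add: power_mult_distrib)
  qed
  have sx: "(\<lambda>i. (opnorm T)^2 * (l2norm (\<lambda>j. x (i, j)))^2) summable_on UNIV"
    by (rule summable_on_cmult_right[OF l2norm_rows(1)[OF x]])
  have sy: "(\<lambda>i. (l2norm (\<lambda>j. y (i, j)))^2) summable_on UNIV"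
    by (rule summable_on_comparison_test[OF sx]) (use le in simp_all)
  show yl: "op_rows T x \<in> l2" unfolding y_def[symmetric] by (rule l2_from_rows[OF rl sy])
  have "(l2norm y)^2 = (\<Sum>\<^sub>\<infinity>i. (l2norm (\<lambda>j. y (i, j)))^2)" by (rule l2norm_rows(2)[OF yl[folded y_def]])
  also have "\<dots> \<le> (\<Sum>\<^sub>\<infinity>i. (opnorm T)^2 * (l2norm (\<lambda>j. x (i, j)))^2)"
    by (rule infsum_mono[OF sy sx le])
  also have "\<dots> = (opnorm T)^2 * (\<Sum>\<^sub>\<infinity>i. (l2norm (\<lambda>j. x (i, j)))^2)"
    by (rule infsum_cmult_right')
  also have "\<dots> = (opnorm T * l2norm x)^2" using l2norm_rows(2)[OF x] by (simp add: power_mult_distrib)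
  finally have "(l2norm y)^2 \<le> (opnorm T * l2norm x)^2" .
  thus "l2norm (op_rows T x) \<le> opnorm T * l2norm x" unfolding y_def[symmetric]
    by (rule power2_le_imp_le) (simp add: opnorm_nonneg[OF T])
qed

lemma vec_swap_l2:
  fixes x :: "'i \<times> 'j \<Rightarrow> complex"
  assumes x: "x \<in> l2"
  shows "vec_swap x \<in> l2" and "l2norm (vec_swap x) = l2norm x"
proof -
  have "vec_swap x = (\<lambda>p. x (prod.swap p))" by (auto simp: vec_swap_def fun_eq_iff)
  thus "vec_swap x \<in> l2" and "l2norm (vec_swap x) = l2norm x"
    using l2_reindex[of prod.swap, OF _ x] by simp_all
qed

lemma op_tensor_eq_rows: "x \<in> l2 \<Longrightarrow> op_tensor S T x = vec_swap (op_rows S (vec_swap (op_rows T x)))"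
  by (simp add: op_tensor_def vec_swap_def op_rows_def fun_eq_iff Let_def)

lemma op_rows_add:
  fixes T :: "'j op" and x y :: "'i \<times> 'j \<Rightarrow> complex"
  assumes T: "T \<in> bops" and x: "x \<in> l2" and y: "y \<in> l2"
  shows "op_rows T (\<lambda>p. x p + y p) = (\<lambda>p. op_rows T x p + op_rows T y p)"
proof -
  have "T (\<lambda>j'. x (i, j') + y (i, j')) = (\<lambda>j. T (\<lambda>j'. x (i, j')) j + T (\<lambda>j'. y (i, j')) j)" for i
    by (rule bops_add[OF T l2_row[OF x] l2_row[OF y]])
  thus ?thesis by (simp add: op_rows_def fun_eq_iff)
qed

lemma op_rows_scale:
  fixes T :: "'j op" and x :: "'i \<times> 'j \<Rightarrow> complex"
  assumes T: "T \<in> bops" and x: "x \<in> l2"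
  shows "op_rows T (\<lambda>p. c * x p) = (\<lambda>p. c * op_rows T x p)"
proof -
  have "T (\<lambda>j'. c * x (i, j')) = (\<lambda>j. c * T (\<lambda>j'. x (i, j')) j)" for i
    by (rule bops_scale[OF T l2_row[OF x]])
  thus ?thesis by (simp add: op_rows_def fun_eq_iff)
qed

lemma vec_swap_add: "vec_swap (\<lambda>p. x p + y p) = (\<lambda>p. vec_swap x p + vec_swap y p)" by (simp add: vec_swap_def fun_eq_iff)
lemma vec_swap_scale: "vec_swap (\<lambda>p. c * x p) = (\<lambda>p. c * vec_swap x p)" by (simp add: vec_swap_def fun_eq_iff)

lemma op_tensor_l2:
  fixes S :: "'i op" and T :: "'j op" and x :: "'i \<times> 'j \<Rightarrow> complex"
  assumes S: "S \<in> bops" and T: "T \<in> bops" and x: "x \<in> l2"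
  shows "op_tensor S T x \<in> l2" and "l2norm (op_tensor S T x) \<le> opnorm S * opnorm T * l2norm x"
proof -
  have a: "op_rows T x \<in> l2" by (rule op_rows_l2(1)[OF T x])
  have b: "vec_swap (op_rows T x) \<in> l2" by (rule vec_swap_l2(1)[OF a])
  have c: "op_rows S (vec_swap (op_rows T x)) \<in> l2" by (rule op_rows_l2(1)[OF S b])
  show "op_tensor S T x \<in> l2" unfolding op_tensor_eq_rows[OF x] by (rule vec_swap_l2(1)[OF c])
  have "l2norm (op_tensor S T x) = l2norm (op_rows S (vec_swap (op_rows T x)))"
    unfolding op_tensor_eq_rows[OF x] by (rule vec_swap_l2(2)[OF c])
  also have "\<dots> \<le> opnorm S * l2norm (vec_swap (op_rows T x))" by (rule op_rows_l2(2)[OF S b])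
  also have "\<dots> = opnorm S * l2norm (op_rows T x)" by (simp add: vec_swap_l2(2)[OF a])
  also have "\<dots> \<le> opnorm S * (opnorm T * l2norm x)"
    by (rule mult_left_mono[OF op_rows_l2(2)[OF T x] opnorm_nonneg[OF S]])
  finally show "l2norm (op_tensor S T x) \<le> opnorm S * opnorm T * l2norm x" by (simp add: algebra_simps)
qed

lemma op_tensor_bops[simp]:
  fixes S :: "'i op" and T :: "'j op"
  assumes S: "S \<in> bops" and T: "T \<in> bops"
  shows "op_tensor S T \<in> bops"
proof (rule bopsI[where K="opnorm S * opnorm T"])
  fix x :: "'i \<times> 'j \<Rightarrow> complex" assume x: "x \<in> l2"
  show "op_tensor S T x \<in> l2" by (rule op_tensor_l2(1)[OF S T x])
  show "l2norm (op_tensor S T x) \<le> opnorm S * opnorm T * l2norm x" by (rule op_tensor_l2(2)[OF S T x])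
next
  fix x y :: "'i \<times> 'j \<Rightarrow> complex" assume x: "x \<in> l2" and y: "y \<in> l2"
  have xy: "(\<lambda>p. x p + y p) \<in> l2" by (rule l2_add[OF x y])
  have a: "op_rows T x \<in> l2" "op_rows T y \<in> l2" using op_rows_l2(1)[OF T] x y by auto
  have b: "vec_swap (op_rows T x) \<in> l2" "vec_swap (op_rows T y) \<in> l2" using vec_swap_l2(1) a by auto
  show "op_tensor S T (\<lambda>i. x i + y i) = (\<lambda>i. op_tensor S T x i + op_tensor S T y i)"
    unfolding op_tensor_eq_rows[OF xy] op_tensor_eq_rows[OF x] op_tensor_eq_rows[OF y]
      op_rows_add[OF T x y] vec_swap_add op_rows_add[OF S b] ..
next
  fix x :: "'i \<times> 'j \<Rightarrow> complex" and c assume x: "x \<in> l2"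
  have xc: "(\<lambda>p. c * x p) \<in> l2" by (rule l2_scale[OF x])
  have a: "op_rows T x \<in> l2" using op_rows_l2(1)[OF T] x by auto
  have b: "vec_swap (op_rows T x) \<in> l2" using vec_swap_l2(1) a by auto
  show "op_tensor S T (\<lambda>i. c * x i) = (\<lambda>i. c * op_tensor S T x i)"
    unfolding op_tensor_eq_rows[OF xc] op_tensor_eq_rows[OF x]
      op_rows_scale[OF T x] vec_swap_scale op_rows_scale[OF S b] ..
next
  fix x :: "'i \<times> 'j \<Rightarrow> complex" assume x: "x \<notin> l2"
  show "op_tensor S T x = (\<lambda>i. 0)" using x by (simp add: op_tensor_def)
qed

lemma opnorm_tensor:
  fixes S :: "'i op" and T :: "'j op"
  assumes S: "S \<in> bops" and T: "T \<in> bops"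
  shows "opnorm (op_tensor S T) \<le> opnorm S * opnorm T"
  by (rule opnorm_le) (use op_tensor_l2(2)[OF S T] opnorm_nonneg[OF S] opnorm_nonneg[OF T] in simp_all)

lemma vec_tensor_l2:
  fixes u :: "'i \<Rightarrow> complex" and v :: "'j \<Rightarrow> complex"
  assumes u: "u \<in> l2" and v: "v \<in> l2"
  shows "vec_tensor u v \<in> l2"
proof (rule l2_from_rows)
  fix i show "(\<lambda>j. vec_tensor u v (i, j)) \<in> l2" unfolding vec_tensor_def using l2_scale[OF v, of "u i"] by simp
next
  have e: "(\<lambda>i. (l2norm (\<lambda>j. vec_tensor u v (i, j)))^2) = (\<lambda>i. (l2norm v)^2 * (cmod (u i))^2)"
  proof
    fix i
    have "l2norm (\<lambda>j. u i * v j) = cmod (u i) * l2norm v" by (rule l2norm_scale[OF v])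
    thus "(l2norm (\<lambda>j. vec_tensor u v (i, j)))^2 = (l2norm v)^2 * (cmod (u i))^2"
      by (simp add: vec_tensor_def power_mult_distrib)
  qed
  show "(\<lambda>i. (l2norm (\<lambda>j. vec_tensor u v (i, j)))^2) summable_on UNIV"
    unfolding e using u by (intro summable_on_cmult_right) (simp add: l2_def)
qed

lemma op_tensor_vec_tensor:
  fixes S :: "'i op" and T :: "'j op"
  assumes S: "S \<in> bops" and T: "T \<in> bops" and u: "u \<in> l2" and v: "v \<in> l2"
  shows "op_tensor S T (vec_tensor u v) = vec_tensor (S u) (T v)"
proof -
  have r1: "op_rows T (vec_tensor u v) = (\<lambda>(i, j). u i * T v j)"
  proof -
    have "T (\<lambda>j'. u i * v j') = (\<lambda>j. u i * T v j)" for i by (rule bops_scale[OF T v])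
    thus ?thesis by (simp add: op_rows_def vec_tensor_def fun_eq_iff)
  qed
  have r2: "op_rows S (vec_swap (\<lambda>(i, j). u i * T v j)) = (\<lambda>(j, i). T v j * S u i)"
  proof -
    have "S (\<lambda>i'. T v j * u i') = (\<lambda>i. T v j * S u i)" for j by (rule bops_scale[OF S u])
    thus ?thesis by (simp add: op_rows_def vec_swap_def fun_eq_iff mult.commute)
  qed
  show ?thesis unfolding op_tensor_eq_rows[OF vec_tensor_l2[OF u v]] r1 r2
    by (simp add: vec_swap_def vec_tensor_def fun_eq_iff mult.commute)
qed

lemma ket_pair: "ket (i, j) = vec_tensor (ket i) (ket j)"
  by (simp add: ket_def vec_tensor_def fun_eq_iff)

lemma op_tensor_ket:
  fixes S :: "'i op" and T :: "'j op"
  assumes S: "S \<in> bops" and T: "T \<in> bops"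
  shows "op_tensor S T (ket (i, j)) = vec_tensor (S (ket i)) (T (ket j))"
  unfolding ket_pair by (rule op_tensor_vec_tensor[OF S T l2_ket l2_ket])

lemma op_tensor_comp:
  fixes S1 S2 :: "'i op" and T1 T2 :: "'j op"
  assumes "S1 \<in> bops" "S2 \<in> bops" "T1 \<in> bops" "T2 \<in> bops"
  shows "op_comp (op_tensor S1 T1) (op_tensor S2 T2) = op_tensor (op_comp S1 S2) (op_comp T1 T2)"
proof (rule bops_eqI_ket)
  fix p :: "'i \<times> 'j"
  obtain i j where p: "p = (i, j)" by (cases p)
  have "op_comp (op_tensor S1 T1) (op_tensor S2 T2) (ket (i, j)) = op_tensor S1 T1 (op_tensor S2 T2 (ket (i, j)))"
    by (simp add: op_comp_def)
  also have "\<dots> = op_tensor S1 T1 (vec_tensor (S2 (ket i)) (T2 (ket j)))" by (simp only: op_tensor_ket[OF assms(2,4)])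
  also have "\<dots> = vec_tensor (S1 (S2 (ket i))) (T1 (T2 (ket j)))"
    by (rule op_tensor_vec_tensor[OF assms(1,3) bops_l2[OF assms(2) l2_ket] bops_l2[OF assms(4) l2_ket]])
  also have "\<dots> = op_tensor (op_comp S1 S2) (op_comp T1 T2) (ket (i, j))"
    by (simp only: op_tensor_ket[OF op_comp_bops[OF assms(1,2)] op_comp_bops[OF assms(3,4)]]) (simp add: op_comp_def)
  finally show "op_comp (op_tensor S1 T1) (op_tensor S2 T2) (ket p) = op_tensor (op_comp S1 S2) (op_comp T1 T2) (ket p)"
    unfolding p .
qed (use assms in simp_all)

lemma op_tensor_add_right:
  fixes S :: "'i op" and T1 T2 :: "'j op"
  assumes "S \<in> bops" "T1 \<in> bops" "T2 \<in> bops"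
  shows "op_tensor S (op_add T1 T2) = op_add (op_tensor S T1) (op_tensor S T2)"
proof (rule bops_eqI_ket)
  fix p :: "'i \<times> 'j"
  obtain i j where p: "p = (i, j)" by (cases p)
  show "op_tensor S (op_add T1 T2) (ket p) = op_add (op_tensor S T1) (op_tensor S T2) (ket p)"
    unfolding p op_add_def op_tensor_ket[OF assms(1,2)] op_tensor_ket[OF assms(1,3)] op_tensor_ket[OF assms(1) op_add_bops[OF assms(2,3)]]
    by (simp add: vec_tensor_def op_add_def fun_eq_iff algebra_simps)
qed (use assms in simp_all)

lemma op_tensor_scale_left:
  fixes S :: "'i op" and T :: "'j op"
  assumes "S \<in> bops" "T \<in> bops"
  shows "op_tensor (op_scale c S) T = op_scale c (op_tensor S T)"
proof (rule bops_eqI_ket)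
  fix p :: "'i \<times> 'j"
  obtain i j where p: "p = (i, j)" by (cases p)
  show "op_tensor (op_scale c S) T (ket p) = op_scale c (op_tensor S T) (ket p)"
    unfolding p op_scale_def op_tensor_ket[OF assms] op_tensor_ket[OF op_scale_bops[OF assms(1)] assms(2)]
    by (simp add: vec_tensor_def op_scale_def fun_eq_iff algebra_simps)
qed (use assms in simp_all)

lemma op_tensor_scale_right:
  fixes S :: "'i op" and T :: "'j op"
  assumes "S \<in> bops" "T \<in> bops"
  shows "op_tensor S (op_scale c T) = op_scale c (op_tensor S T)"
proof (rule bops_eqI_ket)
  fix p :: "'i \<times> 'j"
  obtain i j where p: "p = (i, j)" by (cases p)
  show "op_tensor S (op_scale c T) (ket p) = op_scale c (op_tensor S T) (ket p)"
    unfolding p op_scale_def op_tensor_ket[OF assms] op_tensor_ket[OF assms(1) op_scale_bops[OF assms(2)]]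
    by (simp add: vec_tensor_def op_scale_def fun_eq_iff algebra_simps)
qed (use assms in simp_all)

lemma adj_op_tensor:
  fixes S :: "'i op" and T :: "'j op"
  assumes "S \<in> bops" "T \<in> bops"
  shows "adj (op_tensor S T) = op_tensor (adj S) (adj T)"
proof (rule adj_eqI_ket)
  fix p q :: "'i \<times> 'j"
  obtain i j where p: "p = (i, j)" by (cases p)
  obtain k l where q: "q = (k, l)" by (cases q)
  show "op_tensor (adj S) (adj T) (ket p) q = cnj (op_tensor S T (ket q) p)"
    unfolding p q op_tensor_ket[OF assms] op_tensor_ket[OF adj_bops[OF assms(1)] adj_bops[OF assms(2)]]
    by (simp add: vec_tensor_def adj_ket[OF assms(1)] adj_ket[OF assms(2)])
qed (use assms in simp_all)

lemma op_tensor_idop: "op_tensor (idop :: 'i op) (idop :: 'j op) = idop"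
proof (rule bops_eqI_ket)
  fix p :: "'i \<times> 'j"
  obtain i j where p: "p = (i, j)" by (cases p)
  show "op_tensor (idop :: 'i op) (idop :: 'j op) (ket p) = idop (ket p)"
    unfolding p op_tensor_ket[OF idop_bops idop_bops] by (simp add: ket_pair idop_l2[OF vec_tensor_l2[OF l2_ket l2_ket]])
qed simp_all

section \<open>Monomial operators\<close>

definition monomial_op :: "'i op \<Rightarrow> ('i \<Rightarrow> complex) \<Rightarrow> ('i \<Rightarrow> 'i) \<Rightarrow> bool" where
  "monomial_op X c \<sigma> \<longleftrightarrow> X \<in> bops \<and> (\<forall>i. X (ket i) = (\<lambda>j. if j = \<sigma> i then c i else 0))"

lemma monomial_op_bops: "monomial_op X c \<sigma> \<Longrightarrow> X \<in> bops" by (simp add: monomial_op_def)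
lemma monomial_op_ket: "monomial_op X c \<sigma> \<Longrightarrow> X (ket i) = (\<lambda>j. if j = \<sigma> i then c i else 0)" by (simp add: monomial_op_def)

lemma monomial_op_eqI:
  assumes X: "monomial_op X c \<sigma>" and Y: "monomial_op Y d \<tau>"
  and cd: "\<And>i. c i = d i" and st: "\<And>i. c i \<noteq> 0 \<Longrightarrow> \<sigma> i = \<tau> i"
  shows "X = Y"
proof (rule bops_eqI_ket[OF monomial_op_bops[OF X] monomial_op_bops[OF Y]])
  fix i
  show "X (ket i) = Y (ket i)" unfolding monomial_op_ket[OF X] monomial_op_ket[OF Y]
    using cd[of i] st[of i] by (cases "c i = 0") auto
qed

lemma monomial_op_cong:
  assumes X: "monomial_op X c \<sigma>" and "\<And>i. c i = c' i" and "\<And>i. c i \<noteq> 0 \<Longrightarrow> \<sigma> i = \<sigma>' i"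
  shows "monomial_op X c' \<sigma>'"
  using assms monomial_op_ket[OF X] by (auto simp: monomial_op_def fun_eq_iff) metis+

lemma if_eq_scaled_ket: "(\<lambda>j. if j = k then a else 0) = (\<lambda>j. a * ket k j)" by (simp add: ket_def fun_eq_iff)

lemma monomial_op_comp:
  assumes X: "monomial_op X c \<sigma>" and Y: "monomial_op Y d \<tau>"
  shows "monomial_op (op_comp X Y) (\<lambda>i. d i * c (\<tau> i)) (\<lambda>i. \<sigma> (\<tau> i))"
  unfolding monomial_op_def
proof (intro conjI allI)
  show "op_comp X Y \<in> bops" using monomial_op_bops[OF X] monomial_op_bops[OF Y] by simp
  fix i
  have "op_comp X Y (ket i) = X (\<lambda>j. d i * ket (\<tau> i) j)" by (simp add: op_comp_def monomial_op_ket[OF Y] if_eq_scaled_ket)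
  also have "\<dots> = (\<lambda>j. d i * X (ket (\<tau> i)) j)" by (rule bops_scale[OF monomial_op_bops[OF X] l2_ket])
  also have "\<dots> = (\<lambda>j. if j = \<sigma> (\<tau> i) then d i * c (\<tau> i) else 0)" by (simp add: monomial_op_ket[OF X] fun_eq_iff)
  finally show "op_comp X Y (ket i) = (\<lambda>j. if j = \<sigma> (\<tau> i) then d i * c (\<tau> i) else 0)" .
qed

lemma monomial_op_adj:
  assumes X: "monomial_op X c \<sigma>" and inv1: "\<And>i. \<sigma>' (\<sigma> i) = i" and inv2: "\<And>p. \<sigma> (\<sigma>' p) = p"
  shows "monomial_op (adj X) (\<lambda>p. cnj (c (\<sigma>' p))) \<sigma>'"
  unfolding monomial_op_def
proof (intro conjI allI)
  show "adj X \<in> bops" using monomial_op_bops[OF X] by simp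
  fix p
  show "adj X (ket p) = (\<lambda>j. if j = \<sigma>' p then cnj (c (\<sigma>' p)) else 0)"
  proof
    fix i
    have "p = \<sigma> i \<longleftrightarrow> i = \<sigma>' p" using inv1 inv2 by metis
    thus "adj X (ket p) i = (if i = \<sigma>' p then cnj (c (\<sigma>' p)) else 0)"
      by (auto simp: adj_ket[OF monomial_op_bops[OF X]] monomial_op_ket[OF X])
  qed
qed

lemma monomial_op_add:
  assumes X: "monomial_op X c \<sigma>" and Y: "monomial_op Y d \<tau>" and dis: "\<And>i. c i = 0 \<or> d i = 0"
  shows "monomial_op (op_add X Y) (\<lambda>i. c i + d i) (\<lambda>i. if c i \<noteq> 0 then \<sigma> i else \<tau> i)"
  unfolding monomial_op_def
proof (intro conjI allI)
  show "op_add X Y \<in> bops" using monomial_op_bops[OF X] monomial_op_bops[OF Y] by simp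
  fix i
  show "op_add X Y (ket i) = (\<lambda>j. if j = (if c i \<noteq> 0 then \<sigma> i else \<tau> i) then c i + d i else 0)"
    using dis[of i] by (auto simp: op_add_def monomial_op_ket[OF X] monomial_op_ket[OF Y] fun_eq_iff)
qed

lemma monomial_op_add_eqI:
  assumes Z: "monomial_op Z e \<rho>" and X: "monomial_op X c \<sigma>" and Y: "monomial_op Y d \<tau>"
    and disjoint: "\<And>i. c i = 0 \<or> d i = 0" and "\<And>i. c i + d i = e i"
    and "\<And>i. e i \<noteq> 0 \<Longrightarrow> (if c i \<noteq> 0 then \<sigma> i else \<tau> i) = \<rho> i"
  shows "op_add X Y = Z"
  by (rule monomial_op_eqI[OF monomial_op_add[OF X Y disjoint] Z]) (use assms(5,6) in auto)

lemma monomial_op_scale: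
  assumes X: "monomial_op X c \<sigma>"
  shows "monomial_op (op_scale a X) (\<lambda>i. a * c i) \<sigma>"
  unfolding monomial_op_def
proof (intro conjI allI)
  show "op_scale a X \<in> bops" using monomial_op_bops[OF X] by simp
  fix i
  show "op_scale a X (ket i) = (\<lambda>j. if j = \<sigma> i then a * c i else 0)"
    by (auto simp: op_scale_def monomial_op_ket[OF X] fun_eq_iff)
qed

lemma monomial_op_tensor:
  fixes S :: "'i op" and T :: "'j op"
  assumes S: "monomial_op S c \<sigma>" and T: "monomial_op T d \<tau>"
  shows "monomial_op (op_tensor S T) (\<lambda>(i, j). c i * d j) (\<lambda>(i, j). (\<sigma> i, \<tau> j))"
  unfolding monomial_op_def
proof (intro conjI allI)
  show "op_tensor S T \<in> bops" using monomial_op_bops[OF S] monomial_op_bops[OF T] by simp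
  fix p :: "'i \<times> 'j"
  obtain i j where p: "p = (i, j)" by (cases p)
  show "op_tensor S T (ket p) = (\<lambda>q. if q = (\<lambda>(i, j). (\<sigma> i, \<tau> j)) p then (\<lambda>(i, j). c i * d j) p else 0)"
    unfolding p op_tensor_ket[OF monomial_op_bops[OF S] monomial_op_bops[OF T]]
    by (auto simp: vec_tensor_def monomial_op_ket[OF S] monomial_op_ket[OF T] fun_eq_iff)
qed

lemma monomial_op_idop: "monomial_op idop (\<lambda>_. 1) (\<lambda>i. i)"
  unfolding monomial_op_def by (simp add: idop_l2[OF l2_ket]) (simp add: ket_def fun_eq_iff)

lemma monomial_op_zero: "monomial_op zero_op (\<lambda>_. 0) (\<lambda>i. i)"
  unfolding monomial_op_def by (simp add: zero_op_def)

definition perm_op :: "('i \<Rightarrow> complex) \<Rightarrow> ('i \<Rightarrow> 'i) \<Rightarrow> 'i op" where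
  "perm_op w s x = (if x \<in> l2 then (\<lambda>j. \<Sum>\<^sub>\<infinity>i\<in>{i. s i = j}. w i * x i) else (\<lambda>j. 0))"

lemma basis_op_eq_perm_op: "basis_op = perm_op" by (simp add: fun_eq_iff basis_op_def perm_op_def)

lemma perm_op_monomial:
  fixes w :: "'i \<Rightarrow> complex" and s s' :: "'i \<Rightarrow> 'i"
  assumes inv1: "\<And>i. s' (s i) = i" and inv2: "\<And>j. s (s' j) = j" and B: "\<And>i. cmod (w i) \<le> B"
  shows "monomial_op (perm_op w s) w s" and "opnorm (perm_op w s) \<le> B"
proof -
  have "{i. s i = j} = {s' j}" for j using inv1 inv2 by auto
  hence form: "perm_op w s x = (\<lambda>j. w (s' j) * x (s' j))" if "x \<in> l2" for x
    using that by (simp add: perm_op_def)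
  have b: "bij s'" by (rule o_bij[where g=s]) (use inv1 inv2 in \<open>auto simp: fun_eq_iff\<close>)
  have B0: "0 \<le> B" using B[of undefined] norm_ge_zero order_trans by blast
  have l2: "perm_op w s x \<in> l2" and nb: "l2norm (perm_op w s x) \<le> B * l2norm x" if x: "x \<in> l2" for x
    using l2_reindex[OF b l2_mult_bounded(1)[of w, OF B x]] l2_mult_bounded(2)[of w, OF B x] by (simp_all add: form[OF x])
  have bo: "perm_op w s \<in> bops"
  proof (rule bopsI[where K=B])
    fix x :: "'i \<Rightarrow> complex" assume x: "x \<in> l2"
    show "perm_op w s x \<in> l2" by (rule l2[OF x])
    show "l2norm (perm_op w s x) \<le> B * l2norm x" by (rule nb[OF x])
  next
    fix x y :: "'i \<Rightarrow> complex" assume x: "x \<in> l2" and y: "y \<in> l2"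
    show "perm_op w s (\<lambda>i. x i + y i) = (\<lambda>i. perm_op w s x i + perm_op w s y i)"
      unfolding form[OF x] form[OF y] form[OF l2_add[OF x y]] by (simp add: fun_eq_iff algebra_simps)
  next
    fix x :: "'i \<Rightarrow> complex" and c assume x: "x \<in> l2"
    show "perm_op w s (\<lambda>i. c * x i) = (\<lambda>i. c * perm_op w s x i)"
      unfolding form[OF x] form[OF l2_scale[OF x]] by (simp add: fun_eq_iff algebra_simps)
  next
    fix x :: "'i \<Rightarrow> complex" assume x: "x \<notin> l2"
    show "perm_op w s x = (\<lambda>i. 0)" using x by (simp add: perm_op_def)
  qed
  show "opnorm (perm_op w s) \<le> B"
    by (rule opnorm_le) (use nb B0 in simp_all)
  show "monomial_op (perm_op w s) w s" unfolding monomial_op_def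
  proof (intro conjI allI bo)
    fix i
    show "perm_op w s (ket i) = (\<lambda>j. if j = s i then w i else 0)"
      unfolding form[OF l2_ket] using inv1 inv2 by (auto simp: ket_def fun_eq_iff)
  qed
qed

lemma basis_op_monomial:
  assumes "\<And>i. s' (s i) = i" and "\<And>j. s (s' j) = j" and "\<And>i. cmod (w i) \<le> B"
  shows "monomial_op (basis_op w s) w s" and "opnorm (basis_op w s) \<le> B"
  unfolding basis_op_eq_perm_op by (rule perm_op_monomial[OF assms])+

section \<open>Norm closures and the algebraic tensor product\<close>

lemma op_closure_bops: "op_closure A \<subseteq> bops" by (auto simp: op_closure_def)

lemma op_closure_superset:
  assumes "A \<subseteq> bops"
  shows "A \<subseteq> op_closure A"
  using assms by (auto simp: op_closure_def intro!: bexI)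

lemma op_closure_mono: "A \<subseteq> B \<Longrightarrow> op_closure A \<subseteq> op_closure B"
  by (auto simp: op_closure_def) (meson subsetD)

lemma opnorm_diff_triangle:
  fixes R S T :: "'i op"
  assumes "R \<in> bops" "S \<in> bops" "T \<in> bops"
  shows "opnorm (op_diff T R) \<le> opnorm (op_diff T S) + opnorm (op_diff S R)"
proof -
  have "op_diff T R = op_add (op_diff T S) (op_diff S R)" by (simp add: op_diff_def op_add_def fun_eq_iff)
  thus ?thesis using opnorm_add[of "op_diff T S" "op_diff S R"] assms by simp
qed

lemma op_closureI:
  assumes "T \<in> bops" "\<And>e. e > 0 \<Longrightarrow> \<exists>R\<in>A. opnorm (op_diff T R) < e"
  shows "T \<in> op_closure A"
  using assms by (simp add: op_closure_def)

lemma op_closureE: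
  assumes "T \<in> op_closure A" "e > 0" obtains R where "R \<in> A" "opnorm (op_diff T R) < e"
  using assms by (auto simp: op_closure_def)

lemma op_closure_idem:
  assumes A: "A \<subseteq> bops"
  shows "op_closure (op_closure A) = op_closure A"
proof
  show "op_closure A \<subseteq> op_closure (op_closure A)" by (rule op_closure_superset[OF op_closure_bops])
  show "op_closure (op_closure A) \<subseteq> op_closure A"
  proof
    fix T assume T: "T \<in> op_closure (op_closure A)"
    show "T \<in> op_closure A"
    proof (rule op_closureI)
      show "T \<in> bops" using T op_closure_bops by blast
      fix e :: real assume e: "e > 0"
      obtain R where R: "R \<in> op_closure A" "opnorm (op_diff T R) < e/2" using op_closureE[OF T, of "e/2"] e by auto
      obtain R' where R': "R' \<in> A" "opnorm (op_diff R R') < e/2" using op_closureE[OF R(1), of "e/2"] e by auto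
      have "opnorm (op_diff T R') \<le> opnorm (op_diff T R) + opnorm (op_diff R R')"
        by (rule opnorm_diff_triangle) (use R R' A op_closure_bops \<open>T \<in> bops\<close> in auto)
      thus "\<exists>R\<in>A. opnorm (op_diff T R) < e" using R R' by (intro bexI[of _ R']) auto
    qed
  qed
qed

lemma op_closure_add:
  assumes A: "A \<subseteq> bops" and cl: "\<And>S T. S \<in> A \<Longrightarrow> T \<in> A \<Longrightarrow> op_add S T \<in> A"
  and S: "S \<in> op_closure A" and T: "T \<in> op_closure A"
  shows "op_add S T \<in> op_closure A"
proof (rule op_closureI)
  have Sb: "S \<in> bops" and Tb: "T \<in> bops" using S T op_closure_bops by auto
  show "op_add S T \<in> bops" using Sb Tb by simp
  fix e :: real assume e: "e > 0"
  obtain R1 where R1: "R1 \<in> A" "opnorm (op_diff S R1) < e/2" using op_closureE[OF S, of "e/2"] e by auto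
  obtain R2 where R2: "R2 \<in> A" "opnorm (op_diff T R2) < e/2" using op_closureE[OF T, of "e/2"] e by auto
  have "op_diff (op_add S T) (op_add R1 R2) = op_add (op_diff S R1) (op_diff T R2)"
    by (simp add: op_diff_def op_add_def fun_eq_iff)
  moreover have "R1 \<in> bops" "R2 \<in> bops" using R1 R2 A by blast+
  ultimately have "opnorm (op_diff (op_add S T) (op_add R1 R2)) \<le> opnorm (op_diff S R1) + opnorm (op_diff T R2)"
    using opnorm_add[of "op_diff S R1" "op_diff T R2"] Sb Tb by simp
  thus "\<exists>R\<in>A. opnorm (op_diff (op_add S T) R) < e" using R1 R2 cl by (intro bexI[of _ "op_add R1 R2"]) auto
qed

lemma op_closure_scale:
  assumes A: "A \<subseteq> bops" and cl: "\<And>T. T \<in> A \<Longrightarrow> op_scale c T \<in> A"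
  and T: "T \<in> op_closure A"
  shows "op_scale c T \<in> op_closure A"
proof (rule op_closureI)
  have Tb: "T \<in> bops" using T op_closure_bops by auto
  show "op_scale c T \<in> bops" using Tb by simp
  fix e :: real assume e: "e > 0"
  have cp: "cmod c + 1 > 0" by (smt (verit) norm_ge_zero)
  have e': "e / (cmod c + 1) > 0" using e cp by (rule divide_pos_pos)
  obtain R where R: "R \<in> A" "opnorm (op_diff T R) < e / (cmod c + 1)" using op_closureE[OF T e'] by auto
  have "op_diff (op_scale c T) (op_scale c R) = op_scale c (op_diff T R)"
    by (simp add: op_diff_def op_scale_def fun_eq_iff algebra_simps)
  hence "opnorm (op_diff (op_scale c T) (op_scale c R)) \<le> cmod c * opnorm (op_diff T R)"
    using opnorm_scale[of "op_diff T R" c] Tb R A by auto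
  also have "\<dots> \<le> (cmod c + 1) * opnorm (op_diff T R)"
    using opnorm_nonneg[of "op_diff T R"] Tb R A by (intro mult_right_mono) auto
  also have "\<dots> < (cmod c + 1) * (e / (cmod c + 1))"
    using R(2) cp by (intro mult_strict_left_mono) auto
  also have "\<dots> = e" using cp by simp
  finally show "\<exists>R\<in>A. opnorm (op_diff (op_scale c T) R) < e" using R cl by (intro bexI[of _ "op_scale c R"]) auto
qed

lemma op_closure_adj:
  assumes A: "A \<subseteq> bops" and cl: "\<And>T. T \<in> A \<Longrightarrow> adj T \<in> A"
  and T: "T \<in> op_closure A"
  shows "adj T \<in> op_closure A"
proof (rule op_closureI)
  have Tb: "T \<in> bops" using T op_closure_bops by auto
  show "adj T \<in> bops" using Tb by simp
  fix e :: real assume e: "e > 0"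
  obtain R where R: "R \<in> A" "opnorm (op_diff T R) < e" using op_closureE[OF T e] by auto
  have Rb: "R \<in> bops" using R A by auto
  have "opnorm (op_diff (adj T) (adj R)) = opnorm (adj (op_diff T R))" by (simp add: adj_diff[OF Tb Rb])
  also have "\<dots> \<le> opnorm (op_diff T R)" by (rule adj_opnorm) (simp add: Tb Rb)
  finally show "\<exists>R\<in>A. opnorm (op_diff (adj T) R) < e" using R cl by (intro bexI[of _ "adj R"]) auto
qed

lemma op_comp_diff_right:
  fixes R :: "'i op"
  assumes R: "R \<in> bops" and S: "S \<in> bops" and T: "T \<in> bops"
  shows "op_comp R (op_diff S T) = op_diff (op_comp R S) (op_comp R T)"
  unfolding op_diff_alt op_comp_add_right[OF R S op_scale_bops[OF T]] op_comp_scale_right[OF R T] ..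

lemma opnorm_diff_comp_le:
  assumes S: "S \<in> bops" and T: "T \<in> bops" and R1: "R1 \<in> bops" and R2: "R2 \<in> bops"
  shows "opnorm (op_diff (op_comp S T) (op_comp R1 R2))
    \<le> opnorm S * opnorm (op_diff T R2) + opnorm (op_diff S R1) * (opnorm T + opnorm (op_diff T R2))"
proof -
  have eq: "op_diff (op_comp S T) (op_comp R1 R2) = op_add (op_comp S (op_diff T R2)) (op_comp (op_diff S R1) R2)"
    unfolding op_comp_diff_right[OF S T R2] by (simp add: op_diff_def op_add_def op_comp_def fun_eq_iff)
  have "R2 = op_diff T (op_diff T R2)" by (simp add: op_diff_def fun_eq_iff)
  hence R2_le: "opnorm R2 \<le> opnorm T + opnorm (op_diff T R2)"
    using opnorm_diff_le[of T "op_diff T R2"] T R2 by simp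
  have "opnorm (op_diff (op_comp S T) (op_comp R1 R2))
      \<le> opnorm (op_comp S (op_diff T R2)) + opnorm (op_comp (op_diff S R1) R2)"
    unfolding eq by (rule opnorm_add) (simp_all add: assms)
  also have "\<dots> \<le> opnorm S * opnorm (op_diff T R2) + opnorm (op_diff S R1) * opnorm R2"
    by (intro add_mono opnorm_comp) (simp_all add: assms)
  also have "\<dots> \<le> opnorm S * opnorm (op_diff T R2) + opnorm (op_diff S R1) * (opnorm T + opnorm (op_diff T R2))"
    using R2_le opnorm_nonneg[of "op_diff S R1"] S R1 by (intro add_left_mono mult_left_mono) auto
  finally show ?thesis .
qed

lemma op_closure_comp:
  assumes A: "A \<subseteq> bops" and cl: "\<And>S T. S \<in> A \<Longrightarrow> T \<in> A \<Longrightarrow> op_comp S T \<in> A"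
  and S: "S \<in> op_closure A" and T: "T \<in> op_closure A"
  shows "op_comp S T \<in> op_closure A"
proof (rule op_closureI)
  have Sb: "S \<in> bops" and Tb: "T \<in> bops" using S T op_closure_bops by auto
  show "op_comp S T \<in> bops" using Sb Tb by simp
  fix e :: real assume e: "e > 0"
  define M where "M = opnorm S + opnorm T + 1"
  have M: "M > 0" "M \<ge> 1" using opnorm_nonneg[OF Sb] opnorm_nonneg[OF Tb] by (auto simp: M_def)
  define d where "d = min 1 (e / (M + 1))"
  have d: "d > 0" "d \<le> 1" "d \<le> e / (M + 1)" using e M by (auto simp: d_def)
  obtain R1 where R1: "R1 \<in> A" "opnorm (op_diff S R1) < d" using op_closureE[OF S d(1)] by auto
  obtain R2 where R2: "R2 \<in> A" "opnorm (op_diff T R2) < d" using op_closureE[OF T d(1)] by auto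
  have R1b: "R1 \<in> bops" and R2b: "R2 \<in> bops" using R1 R2 A by auto
  have "opnorm (op_diff (op_comp S T) (op_comp R1 R2))
      \<le> opnorm S * opnorm (op_diff T R2) + opnorm (op_diff S R1) * (opnorm T + opnorm (op_diff T R2))"
    by (rule opnorm_diff_comp_le[OF Sb Tb R1b R2b])
  also have "\<dots> \<le> opnorm S * d + d * (opnorm T + d)"
    using R1 R2 opnorm_nonneg[OF Sb] opnorm_nonneg[OF Tb] opnorm_nonneg[of "op_diff T R2"] Tb R2b
    by (intro add_mono mult_mono) auto
  also have "\<dots> \<le> d * M" using d opnorm_nonneg[OF Sb] opnorm_nonneg[OF Tb]
    by (simp add: M_def algebra_simps mult_left_le_one_le)
  also have "\<dots> < e"
  proof -
    have "d * M \<le> e / (M + 1) * M" using d M by (intro mult_right_mono) auto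
    also have "\<dots> < e" using e M by (simp add: field_simps)
    finally show ?thesis .
  qed
  finally show "\<exists>R\<in>A. opnorm (op_diff (op_comp S T) R) < e"
    using R1 R2 cl by (intro bexI[of _ "op_comp R1 R2"]) auto
qed

lemma op_closure_map:
  fixes \<Phi> :: "'i op \<Rightarrow> 'j op"
  assumes A: "A \<subseteq> bops" and B: "B \<subseteq> bops"
  and pb: "\<And>T. T \<in> bops \<Longrightarrow> \<Phi> T \<in> bops"
  and pd: "\<And>S T. S \<in> bops \<Longrightarrow> T \<in> bops \<Longrightarrow> \<Phi> (op_diff S T) = op_diff (\<Phi> S) (\<Phi> T)"
  and pn: "\<And>T. T \<in> bops \<Longrightarrow> opnorm (\<Phi> T) \<le> opnorm T"
  and img: "\<And>T. T \<in> A \<Longrightarrow> \<Phi> T \<in> B"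
  and T: "T \<in> op_closure A"
  shows "\<Phi> T \<in> op_closure B"
proof (rule op_closureI)
  have Tb: "T \<in> bops" using T op_closure_bops by auto
  show "\<Phi> T \<in> bops" by (rule pb[OF Tb])
  fix e :: real assume e: "e > 0"
  obtain R where R: "R \<in> A" "opnorm (op_diff T R) < e" using op_closureE[OF T e] by auto
  have Rb: "R \<in> bops" using R A by auto
  have "opnorm (op_diff (\<Phi> T) (\<Phi> R)) = opnorm (\<Phi> (op_diff T R))" by (simp add: pd[OF Tb Rb])
  also have "\<dots> \<le> opnorm (op_diff T R)" by (rule pn) (simp add: Tb Rb)
  finally show "\<exists>R\<in>B. opnorm (op_diff (\<Phi> T) R) < e" using R img by (intro bexI[of _ "\<Phi> R"]) auto
qed

lemma star_alg_bops:
  assumes G: "G \<subseteq> bops"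
  shows "star_alg G \<subseteq> bops"
proof
  fix T assume "T \<in> star_alg G"
  thus "T \<in> bops" by (induction rule: star_alg.induct) (use G in auto)
qed

lemma star_alg_least:
  assumes "G \<subseteq> star_alg H"
  shows "star_alg G \<subseteq> star_alg H"
proof
  fix T assume "T \<in> star_alg G"
  thus "T \<in> star_alg H" by (induction rule: star_alg.induct) (use assms in \<open>auto intro: star_alg.intros\<close>)
qed

definition alg_tensor :: "'i op set \<Rightarrow> 'j op set \<Rightarrow> ('i \<times> 'j) op set" where
  "alg_tensor A B = {op_sumk (\<lambda>k. op_tensor (f k) (g k)) n | f g n. (\<forall>k<n. f k \<in> A) \<and> (\<forall>k<n. g k \<in> B)}"

lemma min_tensor_eq_closure: "min_tensor A B = op_closure (alg_tensor A B)"
  by (simp add: min_tensor_def alg_tensor_def)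

lemma op_sumk_cong: "(\<And>k. k < n \<Longrightarrow> h k = h' k) \<Longrightarrow> op_sumk h n = op_sumk h' n"
  by (induction n) auto

lemma alg_tensor_zero: "zero_op \<in> alg_tensor A B"
  unfolding alg_tensor_def by (rule CollectI, rule exI[of _ "\<lambda>_. undefined"], rule exI[of _ "\<lambda>_. undefined"], rule exI[of _ 0]) simp

lemma alg_tensor_snoc:
  assumes X: "X \<in> alg_tensor A B" and f0: "f0 \<in> A" and g0: "g0 \<in> B"
  shows "op_add X (op_tensor f0 g0) \<in> alg_tensor A B"
proof -
  obtain f g n where X: "X = op_sumk (\<lambda>k. op_tensor (f k) (g k)) n" and fg: "\<forall>k<n. f k \<in> A" "\<forall>k<n. g k \<in> B"
    using X unfolding alg_tensor_def by blast
  define f' where "f' = f(n := f0)"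
  define g' where "g' = g(n := g0)"
  have "op_sumk (\<lambda>k. op_tensor (f' k) (g' k)) n = X"
    unfolding X by (rule op_sumk_cong) (simp add: f'_def g'_def)
  hence "op_add X (op_tensor f0 g0) = op_sumk (\<lambda>k. op_tensor (f' k) (g' k)) (Suc n)"
    by (simp add: f'_def g'_def)
  moreover have "\<forall>k<Suc n. f' k \<in> A" "\<forall>k<Suc n. g' k \<in> B"
    using fg f0 g0 by (auto simp: f'_def g'_def less_Suc_eq)
  ultimately show ?thesis unfolding alg_tensor_def by blast
qed

lemma alg_tensor_op_tensor: "f0 \<in> A \<Longrightarrow> g0 \<in> B \<Longrightarrow> op_tensor f0 g0 \<in> alg_tensor A B"
  using alg_tensor_snoc[OF alg_tensor_zero] by (simp add: op_add_zero_left)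

lemma alg_tensor_induct[consumes 1, case_names zero snoc]:
  assumes X: "X \<in> alg_tensor A B"
  and z: "P zero_op"
  and s: "\<And>Y f0 g0. Y \<in> alg_tensor A B \<Longrightarrow> P Y \<Longrightarrow> f0 \<in> A \<Longrightarrow> g0 \<in> B \<Longrightarrow> P (op_add Y (op_tensor f0 g0))"
  shows "P X"
proof -
  obtain f g n where X: "X = op_sumk (\<lambda>k. op_tensor (f k) (g k)) n" and fg: "\<forall>k<n. f k \<in> A" "\<forall>k<n. g k \<in> B"
    using X unfolding alg_tensor_def by blast
  have "op_sumk (\<lambda>k. op_tensor (f k) (g k)) m \<in> alg_tensor A B \<and> P (op_sumk (\<lambda>k. op_tensor (f k) (g k)) m)" if "m \<le> n" for m
    using that
  proof (induction m)
    case 0 thus ?case using z alg_tensor_zero by simp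
  next
    case (Suc m)
    hence IH: "op_sumk (\<lambda>k. op_tensor (f k) (g k)) m \<in> alg_tensor A B" "P (op_sumk (\<lambda>k. op_tensor (f k) (g k)) m)" by auto
    have fm: "f m \<in> A" "g m \<in> B" using fg Suc by auto
    show ?case using alg_tensor_snoc[OF IH(1) fm] s[OF IH fm] by simp
  qed
  thus ?thesis using X by simp
qed

lemma alg_tensor_bops:
  assumes A: "A \<subseteq> bops" and B: "B \<subseteq> bops"
  shows "alg_tensor A B \<subseteq> bops"
proof
  fix X assume "X \<in> alg_tensor A B"
  thus "X \<in> bops"
  proof (induction rule: alg_tensor_induct)
    case (snoc Y f0 g0)
    have "f0 \<in> bops" "g0 \<in> bops" using snoc A B by blast+
    thus ?case using snoc by simp
  qed simp
qed

lemma alg_tensor_add: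
  assumes X: "X \<in> alg_tensor A B" and Y: "Y \<in> alg_tensor A B"
  shows "op_add X Y \<in> alg_tensor A B"
  using Y
proof (induction rule: alg_tensor_induct)
  case zero thus ?case using X by (simp add: op_add_zero_right)
next
  case (snoc Y f0 g0)
  have "op_add X (op_add Y (op_tensor f0 g0)) = op_add (op_add X Y) (op_tensor f0 g0)" by (simp add: op_add_assoc)
  thus ?case using alg_tensor_snoc[OF snoc(4,2,3)] by simp
qed

lemma alg_tensor_scale:
  assumes A: "A \<subseteq> bops" and B: "B \<subseteq> bops" and cl: "\<And>T. T \<in> A \<Longrightarrow> op_scale c T \<in> A"
  and X: "X \<in> alg_tensor A B" shows "op_scale c X \<in> alg_tensor A B"
  using X
proof (induction rule: alg_tensor_induct)
  case zero
  have "op_scale c zero_op = (zero_op :: ('a \<times> 'b) op)" by (simp add: op_scale_def zero_op_def fun_eq_iff)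
  thus ?case using alg_tensor_zero by simp
next
  case (snoc Y f0 g0)
  have "op_scale c (op_add Y (op_tensor f0 g0)) = op_add (op_scale c Y) (op_scale c (op_tensor f0 g0))"
    by (simp add: op_scale_def op_add_def fun_eq_iff algebra_simps)
  also have "op_scale c (op_tensor f0 g0) = op_tensor (op_scale c f0) g0"
    using snoc A B by (simp add: op_tensor_scale_left subsetD)
  finally show ?case using alg_tensor_snoc[OF snoc(4) cl[OF snoc(2)] snoc(3)] by simp
qed

lemma alg_tensor_adj:
  assumes A: "A \<subseteq> bops" and B: "B \<subseteq> bops"
  and clA: "\<And>T. T \<in> A \<Longrightarrow> adj T \<in> A" and clB: "\<And>T. T \<in> B \<Longrightarrow> adj T \<in> B"
  and X: "X \<in> alg_tensor A B" shows "adj X \<in> alg_tensor A B"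
  using X
proof (induction rule: alg_tensor_induct)
  case zero
  have "adj (zero_op :: ('a \<times> 'b) op) = zero_op" by (rule adj_eqI_ket) (simp_all add: zero_op_def)
  thus ?case using alg_tensor_zero by simp
next
  case (snoc Y f0 g0)
  have Yb: "Y \<in> bops" using alg_tensor_bops[OF A B] snoc by auto
  have fb: "f0 \<in> bops" "g0 \<in> bops" using snoc A B by auto
  have "adj (op_add Y (op_tensor f0 g0)) = op_add (adj Y) (op_tensor (adj f0) (adj g0))"
    using Yb fb by (simp add: adj_add adj_op_tensor)
  thus ?case using alg_tensor_snoc[OF snoc(4) clA[OF snoc(2)] clB[OF snoc(3)]] by simp
qed

lemma alg_tensor_comp:
  assumes A: "A \<subseteq> bops" and B: "B \<subseteq> bops"
  and clA: "\<And>S T. S \<in> A \<Longrightarrow> T \<in> A \<Longrightarrow> op_comp S T \<in> A" and clB: "\<And>S T. S \<in> B \<Longrightarrow> T \<in> B \<Longrightarrow> op_comp S T \<in> B"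
  and X: "X \<in> alg_tensor A B" and Y: "Y \<in> alg_tensor A B" shows "op_comp X Y \<in> alg_tensor A B"
proof -
  have one: "op_comp Z (op_tensor f0 g0) \<in> alg_tensor A B" if Z: "Z \<in> alg_tensor A B" and f0: "f0 \<in> A" and g0: "g0 \<in> B" for Z f0 g0
    using Z
  proof (induction rule: alg_tensor_induct)
    case zero
    have "op_comp zero_op (op_tensor f0 g0) = (zero_op :: ('a \<times> 'b) op)" by (simp add: op_comp_def zero_op_def fun_eq_iff)
    thus ?case using alg_tensor_zero by simp
  next
    case (snoc W f1 g1)
    have "op_comp (op_add W (op_tensor f1 g1)) (op_tensor f0 g0) = op_add (op_comp W (op_tensor f0 g0)) (op_comp (op_tensor f1 g1) (op_tensor f0 g0))"
      by (rule op_comp_add_left)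
    also have "op_comp (op_tensor f1 g1) (op_tensor f0 g0) = op_tensor (op_comp f1 f0) (op_comp g1 g0)"
      by (rule op_tensor_comp) (use snoc f0 g0 A B in auto)
    finally show ?case using alg_tensor_snoc[OF snoc(4) clA[OF snoc(2) f0] clB[OF snoc(3) g0]] by simp
  qed
  show ?thesis using Y
  proof (induction rule: alg_tensor_induct)
    case zero
    have Xb: "X \<in> bops" using alg_tensor_bops[OF A B] X by auto
    have "op_comp X zero_op = zero_op" using bops_zero[OF Xb] by (simp add: op_comp_def zero_op_def fun_eq_iff)
    thus ?case using alg_tensor_zero by simp
  next
    case (snoc W f0 g0)
    have Xb: "X \<in> bops" using alg_tensor_bops[OF A B] X by auto
    have Wb: "W \<in> bops" using alg_tensor_bops[OF A B] snoc by auto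
    have "f0 \<in> bops" "g0 \<in> bops" using snoc A B by blast+
    hence tb: "op_tensor f0 g0 \<in> bops" by simp
    have "op_comp X (op_add W (op_tensor f0 g0)) = op_add (op_comp X W) (op_comp X (op_tensor f0 g0))"
      by (rule op_comp_add_right[OF Xb Wb tb])
    thus ?case using alg_tensor_add[OF snoc(4) one[OF X snoc(2,3)]] by simp
  qed
qed

section \<open>Unitaries and inner automorphisms\<close>

text \<open>The norm bound follows from the other two conditions; it is included so that this need
  not be proved.\<close>

definition unitary :: "'i op \<Rightarrow> bool" where
  "unitary U \<longleftrightarrow> U \<in> bops \<and> op_comp U (adj U) = idop \<and> op_comp (adj U) U = idop \<and> opnorm U \<le> 1"

definition Ad :: "'i op \<Rightarrow> 'i op \<Rightarrow> 'i op" where "Ad U T = op_comp U (op_comp T (adj U))"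

lemma unitaryD:
  assumes "unitary U"
  shows "U \<in> bops" "op_comp U (adj U) = idop" "op_comp (adj U) U = idop" "opnorm U \<le> 1" "adj U \<in> bops" "opnorm (adj U) \<le> 1"
  using assms adj_opnorm[of U] by (auto simp: unitary_def)

lemma unitary_adj:
  assumes U: "unitary U"
  shows "unitary (adj U)"
  using unitaryD[OF U] adj_adj[OF unitaryD(1)[OF U]] by (simp add: unitary_def)

lemma unitary_comp:
  assumes U: "unitary U" and V: "unitary V"
  shows "unitary (op_comp U V)"
proof -
  note u = unitaryD[OF U] and v = unitaryD[OF V]
  have a: "adj (op_comp U V) = op_comp (adj V) (adj U)" by (rule adj_comp[OF u(1) v(1)])
  have "op_comp (op_comp U V) (op_comp (adj V) (adj U)) = op_comp U (op_comp (op_comp V (adj V)) (adj U))"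
    by (simp add: op_comp_assoc)
  also have "\<dots> = idop" using u v by (simp add: op_comp_idop_left)
  finally have 1: "op_comp (op_comp U V) (adj (op_comp U V)) = idop" unfolding a .
  have "op_comp (op_comp (adj V) (adj U)) (op_comp U V) = op_comp (adj V) (op_comp (op_comp (adj U) U) V)"
    by (simp add: op_comp_assoc)
  also have "\<dots> = idop" using u v by (simp add: op_comp_idop_left)
  finally have 2: "op_comp (adj (op_comp U V)) (op_comp U V) = idop" unfolding a .
  have "opnorm (op_comp U V) \<le> opnorm U * opnorm V" by (rule opnorm_comp[OF u(1) v(1)])
  also have "\<dots> \<le> 1 * 1" using u v opnorm_nonneg[OF u(1)] opnorm_nonneg[OF v(1)] by (intro mult_mono) auto
  finally show ?thesis using 1 2 u v by (simp add: unitary_def)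
qed

lemma unitary_op_tensor:
  fixes U :: "'i op" and V :: "'j op"
  assumes U: "unitary U" and V: "unitary V" shows "unitary (op_tensor U V)"
proof -
  note u = unitaryD[OF U] and v = unitaryD[OF V]
  have a: "adj (op_tensor U V) = op_tensor (adj U) (adj V)" by (rule adj_op_tensor[OF u(1) v(1)])
  have 1: "op_comp (op_tensor U V) (adj (op_tensor U V)) = idop"
    unfolding a op_tensor_comp[OF u(1) u(5) v(1) v(5)] u(2) v(2) op_tensor_idop ..
  have 2: "op_comp (adj (op_tensor U V)) (op_tensor U V) = idop"
    unfolding a op_tensor_comp[OF u(5) u(1) v(5) v(1)] u(3) v(3) op_tensor_idop ..
  have "opnorm (op_tensor U V) \<le> opnorm U * opnorm V" by (rule opnorm_tensor[OF u(1) v(1)])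
  also have "\<dots> \<le> 1 * 1" using u v opnorm_nonneg[OF u(1)] opnorm_nonneg[OF v(1)] by (intro mult_mono) auto
  finally show ?thesis using 1 2 u v by (simp add: unitary_def)
qed

lemma Ad_bops: "unitary U \<Longrightarrow> T \<in> bops \<Longrightarrow> Ad U T \<in> bops"
  by (simp add: Ad_def unitaryD)

lemma Ad_add:
  assumes U: "unitary U" and S: "S \<in> bops" and T: "T \<in> bops"
  shows "Ad U (op_add S T) = op_add (Ad U S) (Ad U T)"
  unfolding Ad_def op_comp_add_left by (rule op_comp_add_right) (use U S T in \<open>simp_all add: unitaryD\<close>)

lemma Ad_scale:
  assumes U: "unitary U" and T: "T \<in> bops"
  shows "Ad U (op_scale c T) = op_scale c (Ad U T)"
  unfolding Ad_def op_comp_scale_left by (rule op_comp_scale_right) (use U T in \<open>simp_all add: unitaryD\<close>)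

lemma Ad_comp:
  assumes U: "unitary U" and S: "S \<in> bops" and T: "T \<in> bops"
  shows "Ad U (op_comp S T) = op_comp (Ad U S) (Ad U T)"
proof -
  have "op_comp (Ad U S) (Ad U T) = op_comp U (op_comp S (op_comp (op_comp (adj U) U) (op_comp T (adj U))))"
    by (simp add: Ad_def op_comp_assoc)
  also have "\<dots> = Ad U (op_comp S T)"
    by (simp add: unitaryD[OF U] op_comp_idop_left[OF op_comp_bops[OF T unitaryD(5)[OF U]]] Ad_def op_comp_assoc)
  finally show ?thesis ..
qed

lemma Ad_adj:
  assumes U: "unitary U" and T: "T \<in> bops"
  shows "Ad U (adj T) = adj (Ad U T)"
proof -
  note u = unitaryD[OF U]
  have "adj (Ad U T) = op_comp (adj (op_comp T (adj U))) (adj U)" unfolding Ad_def by (rule adj_comp) (use u T in simp_all)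
  also have "\<dots> = op_comp (op_comp (adj (adj U)) (adj T)) (adj U)" by (subst adj_comp) (use u T in simp_all)
  also have "\<dots> = Ad U (adj T)" by (simp add: adj_adj[OF u(1)] Ad_def op_comp_assoc)
  finally show ?thesis ..
qed

lemma Ad_idop: "unitary U \<Longrightarrow> Ad U idop = idop"
  by (simp add: Ad_def unitaryD op_comp_idop_left)

lemma Ad_norm:
  assumes U: "unitary U" and T: "T \<in> bops"
  shows "opnorm (Ad U T) \<le> opnorm T"
proof -
  note u = unitaryD[OF U]
  have "opnorm (Ad U T) \<le> opnorm U * opnorm (op_comp T (adj U))" unfolding Ad_def by (rule opnorm_comp) (use u T in simp_all)
  also have "\<dots> \<le> 1 * (opnorm T * 1)"
  proof (rule mult_mono)
    show "opnorm (op_comp T (adj U)) \<le> opnorm T * 1"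
      using opnorm_comp[OF T u(5)] u(6) opnorm_nonneg[OF T] mult_left_mono[OF u(6) opnorm_nonneg[OF T]] by linarith
  qed (use u T opnorm_nonneg[OF op_comp_bops[OF T u(5)]] in auto)
  finally show ?thesis by simp
qed

lemma Ad_Ad:
  assumes U: "unitary U" and V: "unitary V" and T: "T \<in> bops"
  shows "Ad U (Ad V T) = Ad (op_comp U V) T"
  by (simp add: Ad_def adj_comp unitaryD[OF U] unitaryD[OF V] op_comp_assoc)

lemma Ad_inv:
  assumes U: "unitary U" and T: "T \<in> bops"
  shows "Ad (adj U) (Ad U T) = T"
proof -
  note u = unitaryD[OF U]
  have "Ad (adj U) (Ad U T) = op_comp (op_comp (adj U) U) (op_comp T (op_comp (adj U) U))"
    by (simp add: Ad_def adj_adj[OF u(1)] op_comp_assoc)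
  thus ?thesis by (simp add: u op_comp_idop_left[OF T] op_comp_idop_right[OF T])
qed

lemma Ad_tensor:
  fixes U :: "'i op" and V :: "'j op"
  assumes U: "unitary U" and V: "unitary V" and S: "S \<in> bops" and T: "T \<in> bops"
  shows "Ad (op_tensor U V) (op_tensor S T) = op_tensor (Ad U S) (Ad V T)"
proof -
  note u = unitaryD[OF U] and v = unitaryD[OF V]
  have "Ad (op_tensor U V) (op_tensor S T) = op_comp (op_tensor U V) (op_comp (op_tensor S T) (op_tensor (adj U) (adj V)))"
    by (simp add: Ad_def adj_op_tensor u v)
  also have "\<dots> = op_tensor (Ad U S) (Ad V T)"
    unfolding op_tensor_comp[OF S u(5) T v(5)] by (subst op_tensor_comp) (use u v S T in \<open>simp_all add: Ad_def\<close>)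
  finally show ?thesis .
qed

lemma unital_star_hom_comp:
  "unital_star_hom A B \<Phi> \<Longrightarrow> unital_star_hom B C \<Psi> \<Longrightarrow> unital_star_hom A C (\<Psi> \<circ> \<Phi>)"
  by (simp add: unital_star_hom_def)

lemma unital_star_hom_diff:
  assumes "unital_star_hom bops B \<Phi>" and "S \<in> bops" and "T \<in> bops"
  shows "\<Phi> (op_diff S T) = op_diff (\<Phi> S) (\<Phi> T)"
  using assms by (simp add: unital_star_hom_def op_diff_alt)

lemma unital_star_hom_Ad: "unitary U \<Longrightarrow> unital_star_hom bops bops (Ad U)"
  by (simp add: unital_star_hom_def Ad_bops Ad_idop Ad_add Ad_comp Ad_scale Ad_adj)

lemma unital_star_hom_op_tensor_idop: "unital_star_hom bops bops (op_tensor (idop :: 'i op))"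
proof -
  have "op_tensor (idop :: 'i op) (op_comp S T) = op_comp (op_tensor idop S) (op_tensor idop T)"
    if "S \<in> bops" "T \<in> bops" for S T
    using op_tensor_comp[of "idop :: 'i op" idop S T] that by (simp add: op_comp_idop_left)
  thus ?thesis
    unfolding unital_star_hom_def
    by (auto simp: op_tensor_idop op_tensor_add_right op_tensor_scale_right adj_op_tensor adj_idop)
qed

lemma opnorm_idop: "opnorm (idop :: 'i op) \<le> 1"
  by (rule opnorm_le) simp_all

lemma opnorm_op_tensor_idop_left:
  assumes T: "T \<in> bops"
  shows "opnorm (op_tensor (idop :: 'i op) T) \<le> opnorm T"
proof -
  have "opnorm (op_tensor (idop :: 'i op) T) \<le> opnorm (idop :: 'i op) * opnorm T" by (rule opnorm_tensor) (simp_all add: T)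
  also have "\<dots> \<le> 1 * opnorm T" by (rule mult_right_mono[OF opnorm_idop opnorm_nonneg[OF T]])
  finally show ?thesis by simp
qed

section \<open>Star homomorphisms into the minimal tensor product\<close>

lemma op_closure_star_alg_closed:
  assumes G: "G \<subseteq> bops" and S: "S \<in> op_closure (star_alg G)" and T: "T \<in> op_closure (star_alg G)"
  shows "op_add S T \<in> op_closure (star_alg G)" and "op_comp S T \<in> op_closure (star_alg G)"
    and "op_scale c T \<in> op_closure (star_alg G)" and "adj T \<in> op_closure (star_alg G)"
  using star_alg_bops[OF G] S T
  by (auto intro: op_closure_add op_closure_comp op_closure_scale op_closure_adj star_alg.intros)

lemma unital_cstar_op_closure_star_alg:
  assumes G: "G \<subseteq> bops" and "idop \<in> G"
  shows "unital_cstar (op_closure (star_alg G))"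
proof -
  have "idop \<in> op_closure (star_alg G)"
    using assms op_closure_superset[OF star_alg_bops[OF G]] by (auto intro: star_alg.gen)
  thus ?thesis
    unfolding unital_cstar_def
    by (intro conjI ballI allI)
      (simp_all add: op_closure_star_alg_closed[OF G] op_closure_idem[OF star_alg_bops[OF G]] op_closure_bops)
qed

lemma unital_star_hom_star_alg_into_alg_tensor:
  assumes hom: "unital_star_hom bops bops \<Phi>" and G: "G \<subseteq> bops"
    and A: "unital_cstar A" and B: "unital_cstar B"
    and gen: "\<And>T. T \<in> G \<Longrightarrow> \<Phi> T \<in> alg_tensor A B"
    and T: "T \<in> star_alg G"
  shows "\<Phi> T \<in> alg_tensor A B"
  using T
proof (induction rule: star_alg.induct)
  case (gen T)
  thus ?case by (rule assms(5))
next
  case (add S T)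
  have "S \<in> bops" "T \<in> bops" using add.hyps star_alg_bops[OF G] by auto
  thus ?case using alg_tensor_add[OF add.IH] hom by (simp add: unital_star_hom_def)
next
  case (scale T c)
  have "T \<in> bops" using scale.hyps star_alg_bops[OF G] by auto
  moreover have "op_scale c (\<Phi> T) \<in> alg_tensor A B"
    by (rule alg_tensor_scale[OF _ _ _ scale.IH]) (use A B in \<open>auto simp: unital_cstar_def\<close>)
  ultimately show ?case using hom by (simp add: unital_star_hom_def)
next
  case (comp S T)
  have "S \<in> bops" "T \<in> bops" using comp.hyps star_alg_bops[OF G] by auto
  moreover have "op_comp (\<Phi> S) (\<Phi> T) \<in> alg_tensor A B"
    by (rule alg_tensor_comp[OF _ _ _ _ comp.IH]) (use A B in \<open>auto simp: unital_cstar_def\<close>)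
  ultimately show ?case using hom by (simp add: unital_star_hom_def)
next
  case (star T)
  have "T \<in> bops" using star.hyps star_alg_bops[OF G] by auto
  moreover have "adj (\<Phi> T) \<in> alg_tensor A B"
    by (rule alg_tensor_adj[OF _ _ _ _ star.IH]) (use A B in \<open>auto simp: unital_cstar_def\<close>)
  ultimately show ?case using hom by (simp add: unital_star_hom_def)
qed

lemma unital_star_hom_op_closure_into_min_tensor:
  assumes hom: "unital_star_hom bops bops \<Phi>" and contr: "\<And>T. T \<in> bops \<Longrightarrow> opnorm (\<Phi> T) \<le> opnorm T"
    and G: "G \<subseteq> bops" and A: "unital_cstar A" and B: "unital_cstar B"
    and gen: "\<And>T. T \<in> G \<Longrightarrow> \<Phi> T \<in> alg_tensor A B"
    and T: "T \<in> op_closure (star_alg G)"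
  shows "\<Phi> T \<in> min_tensor A B"
  unfolding min_tensor_eq_closure
proof (rule op_closure_map[OF star_alg_bops[OF G] alg_tensor_bops _ _ contr _ T])
  show "A \<subseteq> bops" "B \<subseteq> bops" using A B by (simp_all add: unital_cstar_def)
  show "\<Phi> T \<in> bops" if "T \<in> bops" for T using hom that by (simp add: unital_star_hom_def)
  show "\<Phi> (op_diff S T) = op_diff (\<Phi> S) (\<Phi> T)" if "S \<in> bops" "T \<in> bops" for S T
    using unital_star_hom_diff[OF hom that] .
  show "\<Phi> T \<in> alg_tensor A B" if "T \<in> star_alg G" for T
    by (rule unital_star_hom_star_alg_into_alg_tensor[OF hom G A B gen that])
qed

section \<open>The generators as monomial operators\<close>

lemma unit_nonzero: "cmod q = 1 \<Longrightarrow> q \<noteq> 0" by auto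

lemma kind_neq [simp]: "(k \<noteq> Kc) = (k = Kq)" "(k \<noteq> Kq) = (k = Kc)" by (cases k; simp)+

definition a_shift :: "idx \<Rightarrow> idx" where
  "a_shift = (\<lambda>(k, m, n). if k = Kc then (if n \<ge> 0 then (Kc, m, n + 1) else (Kc, m + 1, n + 1)) else (k, m, n))"
definition a_shift_inv :: "idx \<Rightarrow> idx" where
  "a_shift_inv = (\<lambda>(k, m, n). if k = Kc then (if n \<ge> 1 then (Kc, m, n - 1) else (Kc, m - 1, n - 1)) else (k, m, n))"
definition b_shift :: "idx \<Rightarrow> idx" where
  "b_shift = (\<lambda>(k, m, n). if k = Kq then (if n > 0 then (Kq, m + 1, n - 1) else (Kq, m, n - 1)) else (k, m, n))"
definition b_shift_inv :: "idx \<Rightarrow> idx" where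
  "b_shift_inv = (\<lambda>(k, m, n). if k = Kq then (if n \<ge> 0 then (Kq, m - 1, n + 1) else (Kq, m, n + 1)) else (k, m, n))"
definition c_shift :: "idx \<Rightarrow> idx" where
  "c_shift = (\<lambda>(k, m, n). if k = Kq then (if n \<ge> 0 then (Kq, m, n + 1) else (Kq, m + 1, n + 1)) else (k, m, n))"
definition c_shift_inv :: "idx \<Rightarrow> idx" where
  "c_shift_inv = (\<lambda>(k, m, n). if k = Kq then (if n \<ge> 1 then (Kq, m, n - 1) else (Kq, m - 1, n - 1)) else (k, m, n))"
definition d_shift :: "idx \<Rightarrow> idx" where
  "d_shift = (\<lambda>(k, m, n). if k = Kc then (if n > 0 then (Kc, m + 1, n - 1) else (Kc, m, n - 1)) else (k, m, n))"
definition d_shift_inv :: "idx \<Rightarrow> idx" where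
  "d_shift_inv = (\<lambda>(k, m, n). if k = Kc then (if n \<ge> 0 then (Kc, m - 1, n + 1) else (Kc, m, n + 1)) else (k, m, n))"

definition ad_weight :: "idx \<Rightarrow> complex" where
  "ad_weight = (\<lambda>(k, m, n). if k = Kc then 1 else 0)"
definition b_weight :: "complex \<Rightarrow> idx \<Rightarrow> complex" where
  "b_weight q = (\<lambda>(k, m, n). if k = Kq then (if n > 0 then - (q powi (2 * n - 1)) else q powi (2 * m)) else 0)"
definition c_weight :: "complex \<Rightarrow> idx \<Rightarrow> complex" where
  "c_weight q = (\<lambda>(k, m, n). if k = Kq then (if n \<ge> 0 then 1 else - (q powi (- 2 * m - 1))) else 0)"

lemmas generator_defs = ad_weight_def b_weight_def c_weight_def a_shift_def b_shift_def c_shift_def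
  d_shift_def a_shift_inv_def b_shift_inv_def c_shift_inv_def d_shift_inv_def

lemma a_shift_inverse: "a_shift_inv (a_shift i) = i" "a_shift (a_shift_inv i) = i"
  by (cases i; auto simp: a_shift_def a_shift_inv_def)+
lemma b_shift_inverse: "b_shift_inv (b_shift i) = i" "b_shift (b_shift_inv i) = i"
  by (cases i; auto simp: b_shift_def b_shift_inv_def)+
lemma c_shift_inverse: "c_shift_inv (c_shift i) = i" "c_shift (c_shift_inv i) = i"
  by (cases i; auto simp: c_shift_def c_shift_inv_def)+
lemma d_shift_inverse: "d_shift_inv (d_shift i) = i" "d_shift (d_shift_inv i) = i"
  by (cases i; auto simp: d_shift_def d_shift_inv_def)+

lemma ad_weight_bound: "cmod (ad_weight i) \<le> 1"
  by (cases i) (simp add: ad_weight_def)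
lemma b_weight_bound: "cmod q = 1 \<Longrightarrow> cmod (b_weight q i) \<le> 1"
  by (cases i) (simp add: b_weight_def norm_power_int)
lemma c_weight_bound: "cmod q = 1 \<Longrightarrow> cmod (c_weight q i) \<le> 1"
  by (cases i) (simp add: c_weight_def norm_power_int)

lemma pi_a_monomial: "monomial_op (pi_a q) ad_weight a_shift"
proof -
  have "pi_a q = basis_op ad_weight a_shift" by (simp add: pi_a_def ad_weight_def a_shift_def)
  thus ?thesis using basis_op_monomial(1)[OF a_shift_inverse ad_weight_bound] by simp
qed

lemma pi_b_monomial: "cmod q = 1 \<Longrightarrow> monomial_op (pi_b q) (b_weight q) b_shift"
proof -
  have "pi_b q = basis_op (b_weight q) b_shift" by (simp add: pi_b_def b_weight_def b_shift_def)
  thus "cmod q = 1 \<Longrightarrow> ?thesis" using basis_op_monomial(1)[OF b_shift_inverse b_weight_bound] by simp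
qed

lemma pi_c_monomial: "cmod q = 1 \<Longrightarrow> monomial_op (pi_c q) (c_weight q) c_shift"
proof -
  have "pi_c q = basis_op (c_weight q) c_shift" by (simp add: pi_c_def c_weight_def c_shift_def)
  thus "cmod q = 1 \<Longrightarrow> ?thesis" using basis_op_monomial(1)[OF c_shift_inverse c_weight_bound] by simp
qed

lemma pi_d_monomial: "monomial_op (pi_d q) ad_weight d_shift"
proof -
  have "pi_d q = basis_op ad_weight d_shift" by (simp add: pi_d_def ad_weight_def d_shift_def)
  thus ?thesis using basis_op_monomial(1)[OF d_shift_inverse ad_weight_bound] by simp
qed

lemma adj_pi_a_monomial: "monomial_op (adj (pi_a q)) (\<lambda>p. cnj (ad_weight (a_shift_inv p))) a_shift_inv"
  by (rule monomial_op_adj[OF pi_a_monomial]) (simp_all add: a_shift_inverse)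
lemma adj_pi_b_monomial: "cmod q = 1 \<Longrightarrow> monomial_op (adj (pi_b q)) (\<lambda>p. cnj (b_weight q (b_shift_inv p))) b_shift_inv"
  by (rule monomial_op_adj[OF pi_b_monomial]) (simp_all add: b_shift_inverse)
lemma adj_pi_c_monomial: "cmod q = 1 \<Longrightarrow> monomial_op (adj (pi_c q)) (\<lambda>p. cnj (c_weight q (c_shift_inv p))) c_shift_inv"
  by (rule monomial_op_adj[OF pi_c_monomial]) (simp_all add: c_shift_inverse)
lemma adj_pi_d_monomial: "monomial_op (adj (pi_d q)) (\<lambda>p. cnj (ad_weight (d_shift_inv p))) d_shift_inv"
  by (rule monomial_op_adj[OF pi_d_monomial]) (simp_all add: d_shift_inverse)

lemma generators_bops:
  assumes "cmod q = 1"
  shows "pi_a q \<in> bops" "pi_b q \<in> bops" "pi_c q \<in> bops" "pi_d q \<in> bops"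
  using pi_a_monomial pi_b_monomial[OF assms] pi_c_monomial[OF assms] pi_d_monomial
  by (auto dest: monomial_op_bops)

text \<open>All weights are of the form \<open>\<plusminus>q\<^sup>k\<close>; writing them as \<open>(-1)\<^sup>j q\<^sup>k\<close> turns identities
  between weights into linear arithmetic on the exponents.\<close>

definition phase :: "complex \<Rightarrow> int \<Rightarrow> int \<Rightarrow> complex" where
  "phase q j k = (-1) powi j * q powi k"

lemma phase_mult: "q \<noteq> 0 \<Longrightarrow> phase q a b * phase q c d = phase q (a + c) (b + d)"
  by (simp add: phase_def power_int_add)

lemma phase_uminus: "- phase q a b = phase q (a + 1) b"
  by (simp add: phase_def power_int_add)

lemma cnj_unit_eq_inverse: "cmod q = 1 \<Longrightarrow> cnj q = inverse q"
  using divide_conv_cnj[of q 1] by (simp add: divide_inverse)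

lemma cnj_phase: "cmod q = 1 \<Longrightarrow> cnj (phase q a b) = phase q a (- b)"
  by (simp add: phase_def cnj_unit_eq_inverse power_int_minus power_int_inverse)

lemma power_int_eq_phase: "q powi k = phase q 0 k"
  by (simp add: phase_def)

lemma inverse_eq_phase: "q \<noteq> 0 \<Longrightarrow> inverse q = phase q 0 (-1)"
  by (simp add: phase_def power_int_minus)

lemma phase_eqI:
  assumes "q \<noteq> 0" "even (a - c)" "b = d"
  shows "phase q a b = phase q c d"
proof -
  have "(-1::complex) powi a = (-1) powi (a - c) * (-1) powi c"
    by (metis diff_add_cancel power_int_add neg_one_neq_zero)
  thus ?thesis using assms by (simp add: phase_def)
qed

lemma phase_eq_1: "even a \<Longrightarrow> b = 0 \<Longrightarrow> phase q a b = 1"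
  by (simp add: phase_def)

lemma phase_add_eq_0:
  assumes "q \<noteq> 0" "odd (a - c)" "b = d"
  shows "phase q a b + phase q c d = 0"
proof -
  have "phase q a b = phase q (c + 1) d" using assms by (intro phase_eqI) (auto simp: algebra_simps)
  thus ?thesis by (simp flip: phase_uminus)
qed

lemma phase_nonzero: "q \<noteq> 0 \<Longrightarrow> phase q a b \<noteq> 0"
  by (simp add: phase_def)

lemmas phase_simps = phase_mult phase_uminus power_int_eq_phase phase_nonzero

section \<open>Unitarity of the fundamental matrix and of \<open>\<pi>(D)\<close>\<close>

lemma less_2_cases: "(i::nat) < 2 \<longleftrightarrow> i = 0 \<or> i = 1" by auto

lemma op_sumk_2: "op_sumk f 2 = op_add (f 0) (f 1)"
  by (simp add: numeral_2_eq_2 op_add_zero_left)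

text \<open>Each entry of \<open>u u\<^sup>*\<close>, \<open>u\<^sup>* u\<close>, \<open>u\<^sup>T (u\<^sup>T)\<^sup>*\<close> and \<open>(u\<^sup>T)\<^sup>* u\<^sup>T\<close> is a sum of two
  monomial operators with disjoint supports, so it is checked on basis vectors.\<close>

lemma u_DT_unitary:
  assumes q: "cmod q = 1" and "i < 2" and "j < 2"
  shows "op_sumk (\<lambda>k. op_comp (u_DT q i k) (adj (u_DT q j k))) 2 = (if i = j then idop else zero_op)"
    and "op_sumk (\<lambda>k. op_comp (adj (u_DT q k i)) (u_DT q k j)) 2 = (if i = j then idop else zero_op)"
    and "op_sumk (\<lambda>k. op_comp (u_DT q k i) (adj (u_DT q k j))) 2 = (if i = j then idop else zero_op)"
    and "op_sumk (\<lambda>k. op_comp (adj (u_DT q i k)) (u_DT q j k)) 2 = (if i = j then idop else zero_op)"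
  using assms(2,3)
  apply (auto simp: less_2_cases op_sumk_2 u_DT_def)
  apply ((rule monomial_op_add_eqI, (rule monomial_op_idop monomial_op_zero monomial_op_comp
        pi_a_monomial pi_b_monomial[OF q] pi_c_monomial[OF q] pi_d_monomial adj_pi_a_monomial
        adj_pi_b_monomial[OF q] adj_pi_c_monomial[OF q] adj_pi_d_monomial)+);
      auto simp: generator_defs split_paired_all phase_simps cnj_phase[OF q] unit_nonzero[OF q]
        split: if_splits intro!: phase_eqI phase_eq_1 phase_add_eq_0)+
  done

definition D_weight :: "complex \<Rightarrow> idx \<Rightarrow> complex" where
  "D_weight q = (\<lambda>(k, m, n). if k = Kc then 1 else (if n \<ge> 0 then q powi (2 * n) else 1))"
definition D_shift :: "idx \<Rightarrow> idx" where
  "D_shift = (\<lambda>(k, m, n). (k, m + 1, n))"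
definition D_shift_inv :: "idx \<Rightarrow> idx" where
  "D_shift_inv = (\<lambda>(k, m, n). (k, m - 1, n))"

lemma D_shift_inverse: "D_shift_inv (D_shift i) = i" "D_shift (D_shift_inv i) = i"
  by (cases i; simp add: D_shift_def D_shift_inv_def)+

lemma pi_D_eq_sum:
  "pi_D q = op_add (op_comp (pi_a q) (pi_d q)) (op_scale (- inverse q) (op_comp (pi_b q) (pi_c q)))"
  by (simp add: pi_D_def op_diff_def op_add_def op_scale_def fun_eq_iff)

lemma pi_D_monomial:
  assumes q: "cmod q = 1"
  shows "monomial_op (pi_D q) (D_weight q) D_shift"
proof -
  have "monomial_op (pi_D q)
     (\<lambda>i. ad_weight i * ad_weight (d_shift i) + (- inverse q) * (c_weight q i * b_weight q (c_shift i)))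
     (\<lambda>i. if ad_weight i * ad_weight (d_shift i) \<noteq> 0 then a_shift (d_shift i) else b_shift (c_shift i))"
    unfolding pi_D_eq_sum
    by (rule monomial_op_add[OF monomial_op_comp[OF pi_a_monomial pi_d_monomial]
          monomial_op_scale[OF monomial_op_comp[OF pi_b_monomial[OF q] pi_c_monomial[OF q]]]])
      (auto simp: ad_weight_def c_weight_def split: prod.splits)
  thus ?thesis
    by (rule monomial_op_cong)
      (use unit_nonzero[OF q] in \<open>auto simp: D_weight_def D_shift_def generator_defs inverse_eq_phase
         phase_simps algebra_simps split_paired_all split: if_splits intro!: phase_eqI phase_eq_1 phase_add_eq_0\<close>)
qed

lemma adj_pi_D_monomial:
  "cmod q = 1 \<Longrightarrow> monomial_op (adj (pi_D q)) (\<lambda>p. cnj (D_weight q (D_shift_inv p))) D_shift_inv"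
  by (rule monomial_op_adj[OF pi_D_monomial]) (simp_all add: D_shift_inverse)

lemma pi_D_bops: "cmod q = 1 \<Longrightarrow> pi_D q \<in> bops"
  using monomial_op_bops[OF pi_D_monomial] .

lemma pi_D_unitary:
  assumes q: "cmod q = 1"
  shows "op_comp (pi_D q) (adj (pi_D q)) = idop" and "op_comp (adj (pi_D q)) (pi_D q) = idop"
proof -
  note simps = D_weight_def D_shift_def D_shift_inv_def phase_simps cnj_phase[OF q] unit_nonzero[OF q]
    split_paired_all
  show "op_comp (pi_D q) (adj (pi_D q)) = idop"
    by (rule monomial_op_eqI[OF monomial_op_comp[OF pi_D_monomial[OF q] adj_pi_D_monomial[OF q]]
          monomial_op_idop]) (auto simp: simps intro!: phase_eq_1)
  show "op_comp (adj (pi_D q)) (pi_D q) = idop"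
    by (rule monomial_op_eqI[OF monomial_op_comp[OF adj_pi_D_monomial[OF q] pi_D_monomial[OF q]]
          monomial_op_idop]) (auto simp: simps intro!: phase_eq_1)
qed

lemma pi_Dinv_eq_adj:
  assumes q: "cmod q = 1"
  shows "pi_Dinv q = adj (pi_D q)"
  unfolding pi_Dinv_def
proof (rule the_equality)
  show "adj (pi_D q) \<in> bops \<and> op_comp (adj (pi_D q)) (pi_D q) = idop \<and> op_comp (pi_D q) (adj (pi_D q)) = idop"
    using pi_D_bops[OF q] pi_D_unitary[OF q] by simp
next
  fix S assume S: "S \<in> bops \<and> op_comp S (pi_D q) = idop \<and> op_comp (pi_D q) S = idop"
  have "S = op_comp S (op_comp (pi_D q) (adj (pi_D q)))"
    using S pi_D_unitary(1)[OF q] by (simp add: op_comp_idop_right)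
  also have "\<dots> = op_comp (op_comp S (pi_D q)) (adj (pi_D q))" by (simp add: op_comp_assoc)
  also have "\<dots> = adj (pi_D q)" using S pi_D_bops[OF q] by (simp add: op_comp_idop_left)
  finally show "S = adj (pi_D q)" .
qed

section \<open>The gauge transformation\<close>

text \<open>In the coordinates \<open>x = m + max n 0\<close>, \<open>y = m - min n 0\<close> the generators \<open>a\<close>, \<open>c\<close> shift \<open>x\<close>
  and \<open>b\<close>, \<open>d\<close> shift \<open>y\<close>; the diagonal phase \<open>gauge_phase\<close> removes the \<open>m\<close>-dependence of
  the weights of \<open>b\<close> and \<open>c\<close>.\<close>

definition gauge_coords :: "idx \<Rightarrow> idx" where
  "gauge_coords = (\<lambda>(k, m, n). (k, m + max n 0, m - min n 0))"
definition gauge_coords_inv :: "idx \<Rightarrow> idx" where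
  "gauge_coords_inv = (\<lambda>(k, x, y). (k, min x y, x - y))"

lemma gauge_coords_inverse: "gauge_coords (gauge_coords_inv p) = p" "gauge_coords_inv (gauge_coords i) = i"
  by (cases p, auto simp: gauge_coords_def gauge_coords_inv_def min_def max_def)
    (cases i, auto simp: gauge_coords_def gauge_coords_inv_def min_def max_def)

definition gauge_phase :: "complex \<Rightarrow> idx \<Rightarrow> complex" where
  "gauge_phase q = (\<lambda>(k, m, n). if k = Kq then phase q m (- (m * m)) else 1)"

lemma norm_gauge_phase: "cmod q = 1 \<Longrightarrow> cmod (gauge_phase q i) = 1"
  by (cases i) (simp add: gauge_phase_def phase_def norm_mult norm_power_int)

definition gauge_op :: "complex \<Rightarrow> idx op" where
  "gauge_op q = basis_op (\<lambda>i. cnj (gauge_phase q i)) gauge_coords"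

lemma gauge_op_monomial: "cmod q = 1 \<Longrightarrow> monomial_op (gauge_op q) (\<lambda>i. cnj (gauge_phase q i)) gauge_coords"
  unfolding gauge_op_def
  by (rule basis_op_monomial(1)[where s'=gauge_coords_inv and B=1]) (simp_all add: gauge_coords_inverse norm_gauge_phase)

lemma adj_gauge_op_monomial:
  "cmod q = 1 \<Longrightarrow> monomial_op (adj (gauge_op q)) (\<lambda>p. gauge_phase q (gauge_coords_inv p)) gauge_coords_inv"
  using monomial_op_adj[OF gauge_op_monomial, of q gauge_coords_inv] by (simp add: gauge_coords_inverse)

lemma unitary_gauge_op:
  assumes q: "cmod q = 1"
  shows "unitary (gauge_op q)"
proof -
  have unit: "gauge_phase q i * cnj (gauge_phase q i) = 1" "cnj (gauge_phase q i) * gauge_phase q i = 1" for i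
    using complex_norm_square[of "gauge_phase q i"] norm_gauge_phase[OF q, of i] by (simp_all add: mult.commute)
  have "op_comp (gauge_op q) (adj (gauge_op q)) = idop" and "op_comp (adj (gauge_op q)) (gauge_op q) = idop"
    by (auto intro!: monomial_op_eqI[OF monomial_op_comp[OF gauge_op_monomial[OF q] adj_gauge_op_monomial[OF q]]
          monomial_op_idop] monomial_op_eqI[OF monomial_op_comp[OF adj_gauge_op_monomial[OF q]
          gauge_op_monomial[OF q]] monomial_op_idop] simp: gauge_coords_inverse unit)
  moreover have "opnorm (gauge_op q) \<le> 1"
    unfolding gauge_op_def
    by (rule basis_op_monomial(2)[where s'=gauge_coords_inv]) (simp_all add: gauge_coords_inverse norm_gauge_phase q)
  ultimately show ?thesis using gauge_op_monomial[OF q] by (simp add: unitary_def monomial_op_bops)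
qed

definition Kc_indicator :: "idx \<Rightarrow> complex" where
  "Kc_indicator = (\<lambda>(k, x, y). if k = Kc then 1 else 0)"
definition Kq_indicator :: "idx \<Rightarrow> complex" where
  "Kq_indicator = (\<lambda>(k, x, y). if k = Kq then 1 else 0)"
definition gauge_b_weight :: "complex \<Rightarrow> idx \<Rightarrow> complex" where
  "gauge_b_weight q = (\<lambda>(k, x, y). if k = Kq then q powi (2 * x) else 0)"
definition gauge_D_weight :: "complex \<Rightarrow> idx \<Rightarrow> complex" where
  "gauge_D_weight q = (\<lambda>(k, x, y). if k = Kc then 1 else - (q powi (2 * x + 1)))"
definition shift_x :: "idx \<Rightarrow> idx" where
  "shift_x = (\<lambda>(k, x, y). (k, x + 1, y))"
definition shift_y :: "idx \<Rightarrow> idx" where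
  "shift_y = (\<lambda>(k, x, y). (k, x, y + 1))"
definition shift_xy :: "idx \<Rightarrow> idx" where
  "shift_xy = (\<lambda>(k, x, y). (k, x + 1, y + 1))"

lemmas gauge_defs = gauge_phase_def gauge_coords_def gauge_coords_inv_def Kc_indicator_def
  Kq_indicator_def gauge_b_weight_def gauge_D_weight_def shift_x_def shift_y_def shift_xy_def

context
  fixes q :: complex
  assumes q: "cmod q = 1"
begin

lemma gauge_monomial:
  assumes "monomial_op X c \<sigma>"
  shows "monomial_op (Ad (gauge_op q) X)
    (\<lambda>p. gauge_phase q (gauge_coords_inv p) * c (gauge_coords_inv p) * cnj (gauge_phase q (\<sigma> (gauge_coords_inv p))))
    (\<lambda>p. gauge_coords (\<sigma> (gauge_coords_inv p)))"
  unfolding Ad_def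
  by (rule monomial_op_cong[OF monomial_op_comp[OF gauge_op_monomial[OF q]
        monomial_op_comp[OF assms adj_gauge_op_monomial[OF q]]]]) simp_all

lemma gauge_a: "monomial_op (Ad (gauge_op q) (pi_a q)) Kc_indicator shift_x"
  by (rule monomial_op_cong[OF gauge_monomial[OF pi_a_monomial]])
    (auto simp: gauge_defs generator_defs min_def max_def split: if_splits)

lemma gauge_b: "monomial_op (Ad (gauge_op q) (pi_b q)) (gauge_b_weight q) shift_y"
  by (rule monomial_op_cong[OF gauge_monomial[OF pi_b_monomial[OF q]]])
    (use unit_nonzero[OF q] in \<open>auto simp: gauge_defs generator_defs min_def max_def phase_simps
       cnj_phase[OF q] algebra_simps split: if_splits intro!: phase_eqI\<close>)

lemma gauge_c: "monomial_op (Ad (gauge_op q) (pi_c q)) Kq_indicator shift_x"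
  by (rule monomial_op_cong[OF gauge_monomial[OF pi_c_monomial[OF q]]])
    (use unit_nonzero[OF q] in \<open>auto simp: gauge_defs generator_defs min_def max_def phase_simps
       cnj_phase[OF q] algebra_simps split: if_splits intro!: phase_eqI phase_eq_1 phase_add_eq_0\<close>)

lemma gauge_d: "monomial_op (Ad (gauge_op q) (pi_d q)) Kc_indicator shift_y"
  by (rule monomial_op_cong[OF gauge_monomial[OF pi_d_monomial]])
    (auto simp: gauge_defs generator_defs min_def max_def split: if_splits)

lemma gauge_D: "monomial_op (Ad (gauge_op q) (pi_D q)) (gauge_D_weight q) shift_xy"
  by (rule monomial_op_cong[OF gauge_monomial[OF pi_D_monomial[OF q]]])
    (use unit_nonzero[OF q] in \<open>auto simp: gauge_defs D_weight_def D_shift_def min_def max_def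
       phase_simps cnj_phase[OF q] algebra_simps split: if_splits intro!: phase_eqI phase_eq_1 phase_add_eq_0\<close>)

end

section \<open>The multiplicative unitary\<close>

definition W_shift :: "idx \<times> idx \<Rightarrow> idx \<times> idx" where
  "W_shift = (\<lambda>((k, u, v), (k2, x, y)).
     if k = Kc then (if k2 = Kc then ((Kc, u + x, v + y), (Kc, x, y)) else ((Kc, u + y, v + x), (Kq, x, y)))
     else (if k2 = Kc then ((Kq, u + y, v + x), (Kq, x, y)) else ((Kq, u + x, v + y), (Kc, x, y))))"

definition W_shift_inv :: "idx \<times> idx \<Rightarrow> idx \<times> idx" where
  "W_shift_inv = (\<lambda>((k, u, v), (k2, x, y)).
     if k = Kc then (if k2 = Kc then ((Kc, u - x, v - y), (Kc, x, y)) else ((Kc, u - y, v - x), (Kq, x, y)))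
     else (if k2 = Kq then ((Kq, u - y, v - x), (Kc, x, y)) else ((Kq, u - x, v - y), (Kq, x, y))))"

definition W_weight :: "complex \<Rightarrow> idx \<times> idx \<Rightarrow> complex" where
  "W_weight q = (\<lambda>((k, u, v), (k2, x, y)).
     if k = Kq then (if k2 = Kc then q powi (2 * u * x + 2 * x * y) else q powi (2 * u * y)) else 1)"

definition mult_unitary :: "complex \<Rightarrow> (idx \<times> idx) op" where
  "mult_unitary q = perm_op (W_weight q) W_shift"

lemma idx_pair_cases: obtains k u v k' x y where "P = ((k, u, v), (k', x, y))"
  by (metis prod_cases3 surj_pair)

lemma W_shift_inverse: "W_shift_inv (W_shift P) = P" "W_shift (W_shift_inv P) = P"
  by (rule idx_pair_cases[of P], simp add: W_shift_inv_def W_shift_def split: kind.split)+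

lemma norm_W_weight: "cmod q = 1 \<Longrightarrow> cmod (W_weight q P) = 1"
  by (rule idx_pair_cases[of P]) (simp add: W_weight_def norm_power_int)

lemma mult_unitary_monomial: "cmod q = 1 \<Longrightarrow> monomial_op (mult_unitary q) (W_weight q) W_shift"
  and opnorm_mult_unitary: "cmod q = 1 \<Longrightarrow> opnorm (mult_unitary q) \<le> 1"
  unfolding mult_unitary_def
  by (rule perm_op_monomial[where s'=W_shift_inv and B=1]; simp add: W_shift_inverse norm_W_weight)+

lemma adj_mult_unitary_monomial:
  "cmod q = 1 \<Longrightarrow> monomial_op (adj (mult_unitary q)) (\<lambda>P. cnj (W_weight q (W_shift_inv P))) W_shift_inv"
  by (rule monomial_op_adj[OF mult_unitary_monomial]) (simp_all add: W_shift_inverse)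

lemma unitary_mult_unitary:
  assumes q: "cmod q = 1"
  shows "unitary (mult_unitary q)"
proof -
  have unit: "W_weight q P * cnj (W_weight q P) = 1" "cnj (W_weight q P) * W_weight q P = 1" for P
    using complex_norm_square[of "W_weight q P"] norm_W_weight[OF q, of P] by (simp_all add: mult.commute)
  have "op_comp (mult_unitary q) (adj (mult_unitary q)) = idop"
    and "op_comp (adj (mult_unitary q)) (mult_unitary q) = idop"
    by (auto intro!: monomial_op_eqI[OF monomial_op_comp[OF mult_unitary_monomial[OF q]
          adj_mult_unitary_monomial[OF q]] monomial_op_idop] monomial_op_eqI[OF monomial_op_comp[OF
          adj_mult_unitary_monomial[OF q] mult_unitary_monomial[OF q]] monomial_op_idop]
        simp: W_shift_inverse unit)
  thus ?thesis using opnorm_mult_unitary[OF q] mult_unitary_monomial[OF q]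
    by (simp add: unitary_def monomial_op_bops)
qed

definition gauge_comult :: "complex \<Rightarrow> idx op \<Rightarrow> (idx \<times> idx) op" where
  "gauge_comult q X = Ad (mult_unitary q) (op_tensor idop X)"

context
  fixes q :: complex
  assumes q: "cmod q = 1"
begin

lemma gauge_comult_monomial:
  assumes X: "monomial_op X c \<sigma>"
  shows "monomial_op (gauge_comult q X)
    (\<lambda>P. cnj (W_weight q (W_shift_inv P)) * c (snd (W_shift_inv P)) * W_weight q (fst (W_shift_inv P), \<sigma> (snd (W_shift_inv P))))
    (\<lambda>P. W_shift (fst (W_shift_inv P), \<sigma> (snd (W_shift_inv P))))"
  unfolding gauge_comult_def Ad_def
  by (rule monomial_op_cong[OF monomial_op_comp[OF mult_unitary_monomial[OF q]
        monomial_op_comp[OF monomial_op_tensor[OF monomial_op_idop X] adj_mult_unitary_monomial[OF q]]]])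
    (simp_all add: split_beta)

lemmas W_defs = W_shift_def W_shift_inv_def W_weight_def Kc_indicator_def Kq_indicator_def
  gauge_b_weight_def gauge_D_weight_def shift_x_def shift_y_def shift_xy_def

lemma gauge_comult_a:
  assumes A: "monomial_op A Kc_indicator shift_x" and B: "monomial_op B (gauge_b_weight q) shift_y"
    and C: "monomial_op C Kq_indicator shift_x"
  shows "gauge_comult q A = op_add (op_tensor A A) (op_tensor B C)"
  by (rule sym, rule monomial_op_add_eqI[OF gauge_comult_monomial[OF A] monomial_op_tensor[OF A A]
        monomial_op_tensor[OF B C]])
    (use unit_nonzero[OF q] in \<open>auto simp: W_defs phase_simps cnj_phase[OF q] algebra_simps
       split_paired_all split: if_splits intro!: phase_eqI phase_eq_1 phase_add_eq_0\<close>)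

lemma gauge_comult_b:
  assumes A: "monomial_op A Kc_indicator shift_x" and B: "monomial_op B (gauge_b_weight q) shift_y"
    and Dd: "monomial_op Dd Kc_indicator shift_y"
  shows "gauge_comult q B = op_add (op_tensor A B) (op_tensor B Dd)"
  by (rule sym, rule monomial_op_add_eqI[OF gauge_comult_monomial[OF B] monomial_op_tensor[OF A B]
        monomial_op_tensor[OF B Dd]])
    (use unit_nonzero[OF q] in \<open>auto simp: W_defs phase_simps cnj_phase[OF q] algebra_simps
       split_paired_all split: if_splits intro!: phase_eqI phase_eq_1 phase_add_eq_0\<close>)

lemma gauge_comult_c:
  assumes A: "monomial_op A Kc_indicator shift_x" and C: "monomial_op C Kq_indicator shift_x"
    and Dd: "monomial_op Dd Kc_indicator shift_y"
  shows "gauge_comult q C = op_add (op_tensor C A) (op_tensor Dd C)"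
  by (rule sym, rule monomial_op_add_eqI[OF gauge_comult_monomial[OF C] monomial_op_tensor[OF C A]
        monomial_op_tensor[OF Dd C]])
    (use unit_nonzero[OF q] in \<open>auto simp: W_defs phase_simps cnj_phase[OF q] algebra_simps
       split_paired_all split: if_splits intro!: phase_eqI phase_eq_1 phase_add_eq_0\<close>)

lemma gauge_comult_d:
  assumes B: "monomial_op B (gauge_b_weight q) shift_y" and C: "monomial_op C Kq_indicator shift_x"
    and Dd: "monomial_op Dd Kc_indicator shift_y"
  shows "gauge_comult q Dd = op_add (op_tensor C B) (op_tensor Dd Dd)"
  by (rule sym, rule monomial_op_add_eqI[OF gauge_comult_monomial[OF Dd] monomial_op_tensor[OF C B]
        monomial_op_tensor[OF Dd Dd]])
    (use unit_nonzero[OF q] in \<open>auto simp: W_defs phase_simps cnj_phase[OF q] algebra_simps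
       split_paired_all split: if_splits intro!: phase_eqI phase_eq_1 phase_add_eq_0\<close>)

lemma gauge_comult_D:
  assumes D: "monomial_op D (gauge_D_weight q) shift_xy"
  shows "gauge_comult q D = op_tensor D D"
  by (rule monomial_op_eqI[OF gauge_comult_monomial[OF D] monomial_op_tensor[OF D D]])
    (use unit_nonzero[OF q] in \<open>auto simp: W_defs phase_simps cnj_phase[OF q] algebra_simps
       split_paired_all split: if_splits intro!: phase_eqI phase_eq_1 phase_add_eq_0\<close>)

end

section \<open>The comultiplication\<close>

definition comult_unitary :: "complex \<Rightarrow> (idx \<times> idx) op" where
  "comult_unitary q = op_comp (op_tensor (adj (gauge_op q)) (adj (gauge_op q))) (mult_unitary q)"

definition comult :: "complex \<Rightarrow> idx op \<Rightarrow> (idx \<times> idx) op" where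
  "comult q = Ad (comult_unitary q) \<circ> op_tensor idop \<circ> Ad (gauge_op q)"

context
  fixes q :: complex
  assumes q: "cmod q = 1"
begin

lemma unitary_adj_gauge_tensor: "unitary (op_tensor (adj (gauge_op q)) (adj (gauge_op q)))"
  by (intro unitary_op_tensor unitary_adj unitary_gauge_op q)

lemma unitary_comult_unitary: "unitary (comult_unitary q)"
  unfolding comult_unitary_def by (intro unitary_comp unitary_adj_gauge_tensor unitary_mult_unitary q)

lemma unital_star_hom_comult: "unital_star_hom bops bops (comult q)"
  unfolding comult_def
  by (rule unital_star_hom_comp[OF unital_star_hom_Ad[OF unitary_gauge_op[OF q]]
        unital_star_hom_comp[OF unital_star_hom_op_tensor_idop unital_star_hom_Ad[OF unitary_comult_unitary]]])

lemma Ad_gauge_bops: "T \<in> bops \<Longrightarrow> Ad (gauge_op q) T \<in> bops"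
  by (simp add: Ad_bops unitary_gauge_op[OF q])

lemma opnorm_comult:
  assumes T: "T \<in> bops"
  shows "opnorm (comult q T) \<le> opnorm T"
proof -
  have "opnorm (comult q T) \<le> opnorm (op_tensor (idop :: idx op) (Ad (gauge_op q) T))"
    unfolding comult_def o_def by (rule Ad_norm[OF unitary_comult_unitary]) (simp add: Ad_gauge_bops T)
  also have "\<dots> \<le> opnorm (Ad (gauge_op q) T)" by (rule opnorm_op_tensor_idop_left[OF Ad_gauge_bops[OF T]])
  also have "\<dots> \<le> opnorm T" by (rule Ad_norm[OF unitary_gauge_op[OF q] T])
  finally show ?thesis .
qed

lemma comult_via_gauge:
  "T \<in> bops \<Longrightarrow> comult q T = Ad (op_tensor (adj (gauge_op q)) (adj (gauge_op q))) (gauge_comult q (Ad (gauge_op q) T))"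
  unfolding comult_def comult_unitary_def gauge_comult_def
  by (simp add: Ad_Ad unitary_adj_gauge_tensor unitary_mult_unitary[OF q] Ad_gauge_bops)

lemma Ad_adj_gauge_tensor:
  assumes "X \<in> bops" and "Y \<in> bops"
  shows "Ad (op_tensor (adj (gauge_op q)) (adj (gauge_op q)))
           (op_tensor (Ad (gauge_op q) X) (Ad (gauge_op q) Y)) = op_tensor X Y"
  using Ad_tensor[OF unitary_adj[OF unitary_gauge_op[OF q]] unitary_adj[OF unitary_gauge_op[OF q]]
      Ad_gauge_bops[OF assms(1)] Ad_gauge_bops[OF assms(2)]]
  by (simp add: Ad_inv[OF unitary_gauge_op[OF q]] assms)

lemma Ad_adj_gauge_tensor_sum:
  assumes "X1 \<in> bops" "Y1 \<in> bops" "X2 \<in> bops" "Y2 \<in> bops"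
  shows "Ad (op_tensor (adj (gauge_op q)) (adj (gauge_op q)))
           (op_add (op_tensor (Ad (gauge_op q) X1) (Ad (gauge_op q) Y1))
                   (op_tensor (Ad (gauge_op q) X2) (Ad (gauge_op q) Y2)))
         = op_add (op_tensor X1 Y1) (op_tensor X2 Y2)"
  by (subst Ad_add[OF unitary_adj_gauge_tensor]) (simp_all add: Ad_gauge_bops assms Ad_adj_gauge_tensor)

lemma comult_a: "comult q (pi_a q) = op_add (op_tensor (pi_a q) (pi_a q)) (op_tensor (pi_b q) (pi_c q))"
  unfolding comult_via_gauge[OF generators_bops(1)[OF q]] gauge_comult_a[OF q gauge_a[OF q] gauge_b[OF q] gauge_c[OF q]]
  by (rule Ad_adj_gauge_tensor_sum) (simp_all add: generators_bops q)

lemma comult_b: "comult q (pi_b q) = op_add (op_tensor (pi_a q) (pi_b q)) (op_tensor (pi_b q) (pi_d q))"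
  unfolding comult_via_gauge[OF generators_bops(2)[OF q]] gauge_comult_b[OF q gauge_a[OF q] gauge_b[OF q] gauge_d[OF q]]
  by (rule Ad_adj_gauge_tensor_sum) (simp_all add: generators_bops q)

lemma comult_c: "comult q (pi_c q) = op_add (op_tensor (pi_c q) (pi_a q)) (op_tensor (pi_d q) (pi_c q))"
  unfolding comult_via_gauge[OF generators_bops(3)[OF q]] gauge_comult_c[OF q gauge_a[OF q] gauge_c[OF q] gauge_d[OF q]]
  by (rule Ad_adj_gauge_tensor_sum) (simp_all add: generators_bops q)

lemma comult_d: "comult q (pi_d q) = op_add (op_tensor (pi_c q) (pi_b q)) (op_tensor (pi_d q) (pi_d q))"
  unfolding comult_via_gauge[OF generators_bops(4)[OF q]] gauge_comult_d[OF q gauge_b[OF q] gauge_c[OF q] gauge_d[OF q]]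
  by (rule Ad_adj_gauge_tensor_sum) (simp_all add: generators_bops q)

lemma comult_Dinv: "comult q (pi_Dinv q) = op_tensor (pi_Dinv q) (pi_Dinv q)"
proof -
  have "comult q (pi_D q) = op_tensor (pi_D q) (pi_D q)"
    unfolding comult_via_gauge[OF pi_D_bops[OF q]] gauge_comult_D[OF q gauge_D[OF q]]
    by (rule Ad_adj_gauge_tensor) (simp_all add: pi_D_bops q)
  thus ?thesis
    using unital_star_hom_comult pi_D_bops[OF q]
    by (simp add: pi_Dinv_eq_adj[OF q] unital_star_hom_def adj_op_tensor)
qed

end

context
  fixes q :: complex
  assumes q: "cmod q = 1"
begin

lemma C_DT_generators_bops: "{idop, pi_a q, pi_b q, pi_c q, pi_d q, pi_Dinv q} \<subseteq> bops"
  using generators_bops[OF q] pi_D_bops[OF q] by (simp add: pi_Dinv_eq_adj[OF q])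

lemma unital_cstar_C_DT: "unital_cstar (C_DT q)"
  unfolding C_DT_def by (rule unital_cstar_op_closure_star_alg[OF C_DT_generators_bops]) simp

lemma generators_in_C_DT:
  "idop \<in> C_DT q" "pi_a q \<in> C_DT q" "pi_b q \<in> C_DT q" "pi_c q \<in> C_DT q" "pi_d q \<in> C_DT q"
  "pi_Dinv q \<in> C_DT q"
  using op_closure_superset[OF star_alg_bops[OF C_DT_generators_bops]]
  by (auto simp: C_DT_def intro: star_alg.gen)

lemma unital_star_hom_comult_C_DT:
  "unital_star_hom (C_DT q) (min_tensor (C_DT q) (C_DT q)) (comult q)"
proof -
  have gen: "comult q T \<in> alg_tensor (C_DT q) (C_DT q)"
    if "T \<in> {idop, pi_a q, pi_b q, pi_c q, pi_d q, pi_Dinv q}" for T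
  proof -
    have "comult q idop = op_tensor idop idop"
      using unital_star_hom_comult[OF q] by (simp add: unital_star_hom_def op_tensor_idop)
    thus ?thesis
      using that by (auto simp: comult_a[OF q] comult_b[OF q] comult_c[OF q] comult_d[OF q] comult_Dinv[OF q]
          intro!: alg_tensor_add alg_tensor_op_tensor generators_in_C_DT)
  qed
  have "comult q T \<in> min_tensor (C_DT q) (C_DT q)" if "T \<in> C_DT q" for T
    using unital_star_hom_op_closure_into_min_tensor[OF unital_star_hom_comult[OF q] opnorm_comult[OF q]
        C_DT_generators_bops unital_cstar_C_DT unital_cstar_C_DT gen] that
    by (simp add: C_DT_def)
  moreover have "C_DT q \<subseteq> bops" using unital_cstar_C_DT by (simp add: unital_cstar_def)
  ultimately show ?thesis
    using unital_star_hom_comult[OF q] by (auto simp: unital_star_hom_def subset_iff)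
qed

lemma C_DT_generated_by_u_DT: "C_DT q \<subseteq> op_closure (star_alg {u_DT q i j |i j. i < 2 \<and> j < 2})"
proof -
  let ?U = "{u_DT q i j |i j. i < 2 \<and> j < 2}"
  have entry: "u_DT q i j \<in> star_alg ?U" if "i < 2" "j < 2" for i j
    using that by (auto intro: star_alg.gen)
  have "u_DT q 0 0 = pi_a q" "u_DT q 0 1 = pi_b q" "u_DT q 1 0 = pi_c q" "u_DT q 1 1 = pi_d q"
    by (simp_all add: u_DT_def)
  hence entries: "pi_a q \<in> star_alg ?U" "pi_b q \<in> star_alg ?U" "pi_c q \<in> star_alg ?U" "pi_d q \<in> star_alg ?U"
    using entry[of 0 0] entry[of 0 1] entry[of 1 0] entry[of 1 1] by simp_all
  have idop_eq: "idop = op_add (op_comp (pi_a q) (adj (pi_a q))) (op_comp (pi_b q) (adj (pi_b q)))"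
    using u_DT_unitary(1)[OF q, of 0 0] by (simp add: op_sumk_2 u_DT_def)
  have "idop \<in> star_alg ?U"
    unfolding idop_eq using entries by (intro star_alg.add star_alg.comp star_alg.star)
  moreover have "pi_Dinv q \<in> star_alg ?U"
    unfolding pi_Dinv_eq_adj[OF q] pi_D_eq_sum using entries
    by (intro star_alg.star star_alg.add star_alg.scale star_alg.comp)
  ultimately show ?thesis
    unfolding C_DT_def using entries by (intro op_closure_mono star_alg_least) auto
qed

lemma u_DT_in_C_DT: "u_DT q i j \<in> C_DT q"
  by (simp add: u_DT_def generators_in_C_DT)

lemma comult_u_DT:
  "\<forall>i<2. \<forall>j<2. comult q (u_DT q i j) = op_sumk (\<lambda>k. op_tensor (u_DT q i k) (u_DT q k j)) 2"
  by (auto simp: less_2_cases op_sumk_2 u_DT_def comult_a[OF q] comult_b[OF q] comult_c[OF q] comult_d[OF q])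

lemma u_DT_invertible: "mat_invertible 2 (C_DT q) (u_DT q)"
  and u_DT_transpose_invertible: "mat_invertible 2 (C_DT q) (\<lambda>i j. u_DT q j i)"
proof -
  have adj_in: "adj (u_DT q i j) \<in> C_DT q" for i j
    using unital_cstar_C_DT u_DT_in_C_DT by (simp add: unital_cstar_def)
  show "mat_invertible 2 (C_DT q) (u_DT q)"
    unfolding mat_invertible_def
    by (rule exI[of _ "\<lambda>i j. adj (u_DT q j i)"]) (simp add: adj_in u_DT_unitary[OF q])
  show "mat_invertible 2 (C_DT q) (\<lambda>i j. u_DT q j i)"
    unfolding mat_invertible_def
    by (rule exI[of _ "\<lambda>i j. adj (u_DT q i j)"]) (simp add: adj_in u_DT_unitary[OF q])
qed

end

theorem proposition3p1:
  fixes q :: complex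
  assumes "cmod q = 1"
  shows "(\<exists>\<Delta>. unital_star_hom (C_DT q) (min_tensor (C_DT q) (C_DT q)) \<Delta>
            \<and> \<Delta> (pi_a q) = op_add (op_tensor (pi_a q) (pi_a q)) (op_tensor (pi_b q) (pi_c q))
            \<and> \<Delta> (pi_b q) = op_add (op_tensor (pi_a q) (pi_b q)) (op_tensor (pi_b q) (pi_d q))
            \<and> \<Delta> (pi_c q) = op_add (op_tensor (pi_c q) (pi_a q)) (op_tensor (pi_d q) (pi_c q))
            \<and> \<Delta> (pi_d q) = op_add (op_tensor (pi_c q) (pi_b q)) (op_tensor (pi_d q) (pi_d q))
            \<and> \<Delta> (pi_Dinv q) = op_tensor (pi_Dinv q) (pi_Dinv q))
         \<and> compact_matrix_qg (C_DT q) 2 (u_DT q)"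
proof
  note hom = unital_star_hom_comult_C_DT[OF assms]
  show "\<exists>\<Delta>. unital_star_hom (C_DT q) (min_tensor (C_DT q) (C_DT q)) \<Delta>
            \<and> \<Delta> (pi_a q) = op_add (op_tensor (pi_a q) (pi_a q)) (op_tensor (pi_b q) (pi_c q))
            \<and> \<Delta> (pi_b q) = op_add (op_tensor (pi_a q) (pi_b q)) (op_tensor (pi_b q) (pi_d q))
            \<and> \<Delta> (pi_c q) = op_add (op_tensor (pi_c q) (pi_a q)) (op_tensor (pi_d q) (pi_c q))
            \<and> \<Delta> (pi_d q) = op_add (op_tensor (pi_c q) (pi_b q)) (op_tensor (pi_d q) (pi_d q))
            \<and> \<Delta> (pi_Dinv q) = op_tensor (pi_Dinv q) (pi_Dinv q)"
    using hom comult_a[OF assms] comult_b[OF assms] comult_c[OF assms] comult_d[OF assms]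
      comult_Dinv[OF assms] by blast
  show "compact_matrix_qg (C_DT q) 2 (u_DT q)"
    unfolding compact_matrix_qg_def
    using unital_cstar_C_DT[OF assms] u_DT_in_C_DT[OF assms] C_DT_generated_by_u_DT[OF assms]
      hom comult_u_DT[OF assms] u_DT_invertible[OF assms] u_DT_transpose_invertible[OF assms]
    by blast
qed

end
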